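(* Let $\mathcal{R}=(\Sigma,V,\geq_s,\Delta)$ be the term rewriting system described in the context, let $\tau\in T[\Sigma,V]$, and let $\lambda$ be a mapping assigning to each affine symbol $f$ its affine constant $\lambda(f)$ (used as $c$ in rules R12, R13). Then the procedure TermNorm$(\mathcal{R},\tau,\lambda)$ described in the context returns a normal form $\tau'$ of $\tau$ (i.e. $\tau$ rewrites to $\tau'$ and no rule of $\Delta$ applies to $\tau'$).
   Context: $\mathbb{F}=\mathbb{GF}(2^n)$. Signature $\Sigma=\mathbb{F}\cup\{\oplus,\otimes,f_1,\dots,f_t\}$: elements of $\mathbb{F}$ are constants, $\oplus,\otimes$ binary (field addition and multiplication), $f_1,\dots,f_t$ unary symbols for affine transformations. $V$ is a set of variables, $\Sigma\cap V=\emptyset$, $\geq_s$ a total order on $V\uplus\Sigma$. Terms $T[\Sigma,V]$: smallest set containing $\mathbb{F}\cup V$ and closed under $\oplus$, $\otimes$, $f_j$; $T_{\backslash\oplus}(\Sigma,V)$ = terms not using $\oplus$. A factor is a term in $\mathbb{F}\cup V$ or of the form $f_i(\tau')$ with $\tau'\in T_{\backslash\oplus}(\Sigma,V)$; a monomial is a product $\alpha_1\otimes\cdots\otimes\alpha_k$ ($k\ge1$) of nonzero factors; a polynomial is a sum of monomials (sums and products treated as flat sequences). Factor order $\geq_l$: $\alpha\geq_l\alpha'$ iff (i) $\alpha,\alpha'\in\mathbb{F}\cup V$ and $\alpha\geq_s\alpha'$; or (ii) $\alpha=f(\tau)$, $\alpha'=f'(\tau')$ with $f\geq_s f'$, or $f=f'$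 and $\tau\geq_p\tau'$; or (iii) $\alpha=f(\tau)$ and $f\geq_s\alpha'$, or $\alpha'=f(\tau)$ and $\alpha\geq_s f$. Monomial order $\geq_p$: lexicographic comparison (w.r.t. $\geq_l$) of the factor sequences sorted in descending $\geq_l$-order. Rules $\Delta$ (with $\tau,\tau_1,\tau_2$ terms, $m_i$ monomials, $\alpha_i$ factors, $f$ an affine symbol with constant $c=\lambda(f)$): R1: $m_1\oplus\cdots\oplus m_k\mapsto m'_1\oplus\cdots\oplus m'_k$ where $(m'_1,\dots,m'_k)={\tt sort}_{\geq_p}(m_1,\dots,m_k)\neq(m_1,\dots,m_k)$; R2: $\alpha_1\cdots\alpha_k\mapsto\alpha'_1\cdots\alpha'_k$ where $(\alpha'_1,\dots,\alpha'_k)={\tt sort}_{\geq_l}(\alpha_1,\dots,\alpha_k)\neq(\alpha_1,\dots,\alpha_k)$; R3: $\tau\oplus\tau\mapsto0$; R4: $\tau\otimes0\mapsto0$; R5: $0\otimes\tau\mapsto0$; R6: $\tau\oplus0\mapsto\tau$; R7: $0\oplus\tau\mapsto\tau$; R8: $\tau\otimes1\mapsto\tau$; R9: $1\otimes\tau\mapsto\tau$; R10: $(\tau_1\oplus\tau_2)\otimes\tau\mapsto(\tau_1\otimes\tau)\oplus(\tau_2\otimes\tau)$; R11: $\tau\otimes(\tau_1\oplus\tau_2)\mapsto(\tau\otimes\tau_1)\oplus(\tau\otimes\tau_2)$; R12: $f(\tau_1\oplus\tau_2)\mapsto f(\tau_1)\oplus f(\tau_2)\oplus c$; R13: $f(0)\mapsto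 c$. A rewriting step replaces one occurrence of a subterm matching a left-hand side. Procedure TermNorm$(\mathcal{R},\tau,\lambda)$: (1) rewrite $\tau$ by iteratively applying rules R3–R13 until no more change; (2) sort the result by iteratively applying rule R2 (recursively, from innermost subterms); (3) sort the result by iteratively applying rule R1; (4) rewrite the result by iteratively applying rules R3, R6, R7 until no more change; (5) return the resulting term $\tau'$. *)

theory Defs
  imports Main "HOL-Library.Cardinality"
begin

datatype ('c, 'v, 'f) sym = SConst 'c | SVar 'v | SPlus | STimes | SAff 'f

text \<open>Terms T[Sigma,V]: Add = oplus, Mul = otimes, Aff f t = f(t).\<close>
datatype ('c, 'v, 'f) trm =
    Cst 'c | Var 'v
  | Add "('c, 'v, 'f) trm" "('c, 'v, 'f) trm"
  | Mul "('c, 'v, 'f) trm" "('c, 'v, 'f) trm"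
  | Aff 'f "('c, 'v, 'f) trm"

definition total_order_rel :: "('a \<Rightarrow> 'a \<Rightarrow> bool) \<Rightarrow> bool" where
  "total_order_rel r \<longleftrightarrow> (\<forall>x. r x x) \<and> (\<forall>x y. r x y \<and> r y x \<longrightarrow> x = y)
     \<and> (\<forall>x y z. r x y \<and> r y z \<longrightarrow> r x z) \<and> (\<forall>x y. r x y \<or> r y x)"

fun summands :: "('c, 'v, 'f) trm \<Rightarrow> ('c, 'v, 'f) trm list" where
  "summands (Add a b) = summands a @ summands b"
| "summands t = [t]"

fun factors :: "('c, 'v, 'f) trm \<Rightarrow> ('c, 'v, 'f) trm list" where
  "factors (Mul a b) = factors a @ factors b"
| "factors t = [t]"

fun mk_sum :: "('c::zero, 'v, 'f) trm list \<Rightarrow> ('c, 'v, 'f) trm" where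
  "mk_sum [] = Cst 0"
| "mk_sum [t] = t"
| "mk_sum (t # ts) = Add t (mk_sum ts)"

fun mk_prod :: "('c::one, 'v, 'f) trm list \<Rightarrow> ('c, 'v, 'f) trm" where
  "mk_prod [] = Cst 1"
| "mk_prod [t] = t"
| "mk_prod (t # ts) = Mul t (mk_prod ts)"

fun plus_free :: "('c, 'v, 'f) trm \<Rightarrow> bool" where
  "plus_free (Cst c) = True"
| "plus_free (Var v) = True"
| "plus_free (Add a b) = False"
| "plus_free (Mul a b) = (plus_free a \<and> plus_free b)"
| "plus_free (Aff f t) = plus_free t"

fun is_factor :: "('c, 'v, 'f) trm \<Rightarrow> bool" where
  "is_factor (Cst c) = True"
| "is_factor (Var v) = True"
| "is_factor (Aff f t) = plus_free t"
| "is_factor _ = False"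

definition is_monomial :: "('c::zero, 'v, 'f) trm \<Rightarrow> bool" where
  "is_monomial t \<longleftrightarrow> (\<forall>a\<in>set (factors t). is_factor a \<and> a \<noteq> Cst 0)"

fun insort_by :: "('a \<Rightarrow> 'a \<Rightarrow> bool) \<Rightarrow> 'a \<Rightarrow> 'a list \<Rightarrow> 'a list" where
  "insort_by ge x [] = [x]"
| "insort_by ge x (y # ys) = (if ge x y then x # y # ys else y # insort_by ge x ys)"

definition sort_by :: "('a \<Rightarrow> 'a \<Rightarrow> bool) \<Rightarrow> 'a list \<Rightarrow> 'a list" where
  "sort_by ge xs = foldr (insort_by ge) xs []"

fun lex_ge :: "('a \<Rightarrow> 'a \<Rightarrow> bool) \<Rightarrow> 'a list \<Rightarrow> 'a list \<Rightarrow> bool" where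
  "lex_ge ge [] [] = True"
| "lex_ge ge [] (y # ys) = False"
| "lex_ge ge (x # xs) [] = True"
| "lex_ge ge (x # xs) (y # ys) =
     (if ge x y \<and> \<not> ge y x then True
      else if ge x y \<and> ge y x then lex_ge ge xs ys else False)"

fun atom_sym :: "('c, 'v, 'f) trm \<Rightarrow> ('c, 'v, 'f) sym option" where
  "atom_sym (Cst c) = Some (SConst c)"
| "atom_sym (Var v) = Some (SVar v)"
| "atom_sym _ = None"

text \<open>The mutual recursion ge_l / ge_p is realised with a fuel parameter (the nesting
  depth of affine symbols); with sufficient fuel the value does not depend on it.\<close>
primrec ge_l_fuel :: "(('c, 'v, 'f) sym \<Rightarrow> ('c, 'v, 'f) sym \<Rightarrow> bool) \<Rightarrow> nat
    \<Rightarrow> ('c, 'v, 'f) trm \<Rightarrow> ('c, 'v, 'f) trm \<Rightarrow> bool" where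
  "ge_l_fuel ges 0 a b = False"
| "ge_l_fuel ges (Suc n) a b =
     (case (a, b) of
        (Aff f t, Aff g u) \<Rightarrow>
           (f \<noteq> g \<and> ges (SAff f) (SAff g))
         \<or> (f = g \<and> lex_ge (ge_l_fuel ges n) (sort_by (ge_l_fuel ges n) (factors t))
                                            (sort_by (ge_l_fuel ges n) (factors u)))
      | (Aff f t, _) \<Rightarrow> (case atom_sym b of Some s \<Rightarrow> ges (SAff f) s | None \<Rightarrow> False)
      | (_, Aff g u) \<Rightarrow> (case atom_sym a of Some s \<Rightarrow> ges s (SAff g) | None \<Rightarrow> False)
      | _ \<Rightarrow> (case (atom_sym a, atom_sym b) of
                (Some s, Some s') \<Rightarrow> ges s s'
              | _ \<Rightarrow> False))"

definition ge_l :: "(('c, 'v, 'f) sym \<Rightarrow> ('c, 'v, 'f) sym \<Rightarrow> bool)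
    \<Rightarrow> ('c, 'v, 'f) trm \<Rightarrow> ('c, 'v, 'f) trm \<Rightarrow> bool" where
  "ge_l ges a b = ge_l_fuel ges (size a + size b) a b"

definition ge_p :: "(('c, 'v, 'f) sym \<Rightarrow> ('c, 'v, 'f) sym \<Rightarrow> bool)
    \<Rightarrow> ('c, 'v, 'f) trm \<Rightarrow> ('c, 'v, 'f) trm \<Rightarrow> bool" where
  "ge_p ges s t = lex_ge (ge_l ges) (sort_by (ge_l ges) (factors s)) (sort_by (ge_l ges) (factors t))"

definition rule :: "(('c::field, 'v, 'f) sym \<Rightarrow> ('c, 'v, 'f) sym \<Rightarrow> bool) \<Rightarrow> ('f \<Rightarrow> 'c)
    \<Rightarrow> nat \<Rightarrow> ('c, 'v, 'f) trm \<Rightarrow> ('c, 'v, 'f) trm \<Rightarrow> bool" where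
  "rule ges lam i s t \<longleftrightarrow>
     (i = 1 \<and> (\<forall>m\<in>set (summands s). is_monomial m)
            \<and> sort_by (ge_p ges) (summands s) \<noteq> summands s
            \<and> t = mk_sum (sort_by (ge_p ges) (summands s)))
   \<or> (i = 2 \<and> (\<forall>a\<in>set (factors s). is_factor a)
            \<and> sort_by (ge_l ges) (factors s) \<noteq> factors s
            \<and> t = mk_prod (sort_by (ge_l ges) (factors s)))
   \<or> (i = 3 \<and> (\<exists>u. s = Add u u) \<and> t = Cst 0)
   \<or> (i = 4 \<and> (\<exists>u. s = Mul u (Cst 0)) \<and> t = Cst 0)
   \<or> (i = 5 \<and> (\<exists>u. s = Mul (Cst 0) u) \<and> t = Cst 0)
   \<or> (i = 6 \<and> s = Add t (Cst 0))
   \<or> (i = 7 \<and> s = Add (Cst 0) t)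
   \<or> (i = 8 \<and> s = Mul t (Cst 1))
   \<or> (i = 9 \<and> s = Mul (Cst 1) t)
   \<or> (i = 10 \<and> (\<exists>u1 u2 u. s = Mul (Add u1 u2) u \<and> t = Add (Mul u1 u) (Mul u2 u)))
   \<or> (i = 11 \<and> (\<exists>u u1 u2. s = Mul u (Add u1 u2) \<and> t = Add (Mul u u1) (Mul u u2)))
   \<or> (i = 12 \<and> (\<exists>f u1 u2. s = Aff f (Add u1 u2)
                    \<and> t = Add (Add (Aff f u1) (Aff f u2)) (Cst (lam f))))
   \<or> (i = 13 \<and> (\<exists>f. s = Aff f (Cst 0) \<and> t = Cst (lam f)))"

definition rules :: "(('c::field, 'v, 'f) sym \<Rightarrow> ('c, 'v, 'f) sym \<Rightarrow> bool) \<Rightarrow> ('f \<Rightarrow> 'c)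
    \<Rightarrow> nat set \<Rightarrow> ('c, 'v, 'f) trm \<Rightarrow> ('c, 'v, 'f) trm \<Rightarrow> bool" where
  "rules ges lam I s t \<longleftrightarrow> (\<exists>i\<in>I. rule ges lam i s t)"

inductive aeq :: "('c, 'v, 'f) trm \<Rightarrow> ('c, 'v, 'f) trm \<Rightarrow> bool" where
  aeq_refl: "aeq s s"
| aeq_sym: "aeq s t \<Longrightarrow> aeq t s"
| aeq_trans: "aeq s t \<Longrightarrow> aeq t u \<Longrightarrow> aeq s u"
| aeq_assoc_add: "aeq (Add (Add a b) c) (Add a (Add b c))"
| aeq_assoc_mul: "aeq (Mul (Mul a b) c) (Mul a (Mul b c))"
| aeq_add: "aeq a a' \<Longrightarrow> aeq b b' \<Longrightarrow> aeq (Add a b) (Add a' b')"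
| aeq_mul: "aeq a a' \<Longrightarrow> aeq b b' \<Longrightarrow> aeq (Mul a b) (Mul a' b')"
| aeq_aff: "aeq a a' \<Longrightarrow> aeq (Aff f a) (Aff f a')"

inductive ctx_step :: "(('c, 'v, 'f) trm \<Rightarrow> ('c, 'v, 'f) trm \<Rightarrow> bool)
    \<Rightarrow> ('c, 'v, 'f) trm \<Rightarrow> ('c, 'v, 'f) trm \<Rightarrow> bool" for R where
  root: "R s t \<Longrightarrow> ctx_step R s t"
| add_l: "ctx_step R s t \<Longrightarrow> ctx_step R (Add s u) (Add t u)"
| add_r: "ctx_step R s t \<Longrightarrow> ctx_step R (Add u s) (Add u t)"
| mul_l: "ctx_step R s t \<Longrightarrow> ctx_step R (Mul s u) (Mul t u)"
| mul_r: "ctx_step R s t \<Longrightarrow> ctx_step R (Mul u s) (Mul u t)"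
| aff: "ctx_step R s t \<Longrightarrow> ctx_step R (Aff f s) (Aff f t)"

text \<open>One rewriting step: replace one occurrence of a redex, terms taken modulo
  associativity of oplus and otimes (flat sequences).\<close>
definition rstep :: "(('c, 'v, 'f) trm \<Rightarrow> ('c, 'v, 'f) trm \<Rightarrow> bool)
    \<Rightarrow> ('c, 'v, 'f) trm \<Rightarrow> ('c, 'v, 'f) trm \<Rightarrow> bool" where
  "rstep R s t \<longleftrightarrow> (\<exists>s' t'. aeq s s' \<and> ctx_step R s' t' \<and> aeq t' t)"

definition is_nf :: "(('c, 'v, 'f) trm \<Rightarrow> ('c, 'v, 'f) trm \<Rightarrow> bool)
    \<Rightarrow> ('c, 'v, 'f) trm \<Rightarrow> bool" where
  "is_nf R s \<longleftrightarrow> \<not> (\<exists>t. rstep R s t)"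

abbreviation Delta where "Delta ges lam \<equiv> rules ges lam {1..13}"

section \<open>The procedure TermNorm (as an input/output relation over all runs)\<close>

text \<open>R2 applied innermost: the factors of the redex are already R2-sorted.\<close>
definition rule2_inner where
  "rule2_inner ges lam s t \<longleftrightarrow> rule ges lam 2 s t
     \<and> (\<forall>a\<in>set (factors s). is_nf (rules ges lam {2}) a)"

definition term_norm :: "(('c::field, 'v, 'f) sym \<Rightarrow> ('c, 'v, 'f) sym \<Rightarrow> bool) \<Rightarrow> ('f \<Rightarrow> 'c)
    \<Rightarrow> ('c, 'v, 'f) trm \<Rightarrow> ('c, 'v, 'f) trm \<Rightarrow> bool" where
  "term_norm ges lam \<tau> \<tau>' \<longleftrightarrow>
     (\<exists>\<tau>1 \<tau>2 \<tau>3.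
        (rstep (rules ges lam {3..13}))\<^sup>*\<^sup>* \<tau> \<tau>1 \<and> is_nf (rules ges lam {3..13}) \<tau>1
      \<and> (rstep (rule2_inner ges lam))\<^sup>*\<^sup>* \<tau>1 \<tau>2 \<and> is_nf (rule2_inner ges lam) \<tau>2
      \<and> (rstep (rules ges lam {1}))\<^sup>*\<^sup>* \<tau>2 \<tau>3 \<and> is_nf (rules ges lam {1}) \<tau>3
      \<and> (rstep (rules ges lam {3, 6, 7}))\<^sup>*\<^sup>* \<tau>3 \<tau>' \<and> is_nf (rules ges lam {3, 6, 7}) \<tau>')"

end

theory Submission
  imports Defs
begin

text \<open>
  Terms are compared modulo associativity through the right-nested representative
  \<open>assoc_nf\<close>. Each phase of TermNorm reaches a normal form of its own rules: R3--R13 and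
  R3, R6, R7 decrease a polynomial interpretation, products can be sorted bottom-up, and a
  single R1 step sorts a sum. Throughout, the term remains a sum of monomials in which no
  product contains 0 or 1, no affine symbol is applied to a sum or to 0, and 0 is not a proper
  summand; from phase 2 on all products, and from phase 3 on all nonzero summands, are sorted,
  and phase 4 leaves no two adjacent equal summands. Such a term is irreducible for R1, R2 and
  R4--R13. Modulo associativity R3 matches every repeated block of consecutive summands; since
  the monomial order is antisymmetric modulo associativity on sorted monomials, a repeated
  block in a sorted sum would yield two adjacent equal summands.
\<close>

section \<open>Terms modulo associativity\<close>

fun add_append :: "('c, 'v, 'f) trm \<Rightarrow> ('c, 'v, 'f) trm \<Rightarrow> ('c, 'v, 'f) trm" where
  "add_append (Add p q) y = Add p (add_append q y)"
| "add_append x y = Add x y"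

fun mul_append :: "('c, 'v, 'f) trm \<Rightarrow> ('c, 'v, 'f) trm \<Rightarrow> ('c, 'v, 'f) trm" where
  "mul_append (Mul p q) y = Mul p (mul_append q y)"
| "mul_append x y = Mul x y"

fun assoc_nf :: "('c, 'v, 'f) trm \<Rightarrow> ('c, 'v, 'f) trm" where
  "assoc_nf (Cst c) = Cst c"
| "assoc_nf (Var v) = Var v"
| "assoc_nf (Add a b) = add_append (assoc_nf a) (assoc_nf b)"
| "assoc_nf (Mul a b) = mul_append (assoc_nf a) (assoc_nf b)"
| "assoc_nf (Aff f a) = Aff f (assoc_nf a)"

fun is_Add :: "('c, 'v, 'f) trm \<Rightarrow> bool" where
  "is_Add (Add a b) = True"
| "is_Add _ = False"

fun is_Mul :: "('c, 'v, 'f) trm \<Rightarrow> bool" where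
  "is_Mul (Mul a b) = True"
| "is_Mul _ = False"

lemma add_append_assoc: "add_append (add_append x y) z = add_append x (add_append y z)"
  by (induction x y rule: add_append.induct) auto

lemma mul_append_assoc: "mul_append (mul_append x y) z = mul_append x (mul_append y z)"
  by (induction x y rule: mul_append.induct) auto

lemma aeq_imp_assoc_nf_eq: "aeq s t \<Longrightarrow> assoc_nf s = assoc_nf t"
  by (induction rule: aeq.induct) (auto simp: add_append_assoc mul_append_assoc)

lemma aeq_Add_add_append: "aeq (Add x y) (add_append x y)"
proof (induction x y rule: add_append.induct)
  case (1 p q y)
  then show ?case using aeq_assoc_add aeq_add aeq_refl aeq_trans by fastforce
qed (auto intro: aeq_refl)

lemma aeq_Mul_mul_append: "aeq (Mul x y) (mul_append x y)"
proof (induction x y rule: mul_append.induct)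
  case (1 p q y)
  then show ?case using aeq_assoc_mul aeq_mul aeq_refl aeq_trans by fastforce
qed (auto intro: aeq_refl)

lemma aeq_assoc_nf: "aeq s (assoc_nf s)"
proof (induction s)
  case (Add a b)
  then show ?case using aeq_add aeq_Add_add_append aeq_trans by fastforce
next
  case (Mul a b)
  then show ?case using aeq_mul aeq_Mul_mul_append aeq_trans by fastforce
qed (auto intro: aeq_refl aeq_aff)

lemma aeq_iff_assoc_nf_eq: "aeq s t \<longleftrightarrow> assoc_nf s = assoc_nf t"
  using aeq_imp_assoc_nf_eq aeq_assoc_nf aeq_sym aeq_trans by metis

lemma is_Add_add_append [simp]: "is_Add (add_append x y)" "\<not> is_Mul (add_append x y)"
  by (induction x y rule: add_append.induct) auto

lemma is_Mul_mul_append [simp]: "is_Mul (mul_append x y)" "\<not> is_Add (mul_append x y)"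
  by (induction x y rule: mul_append.induct) auto

lemma is_Add_assoc_nf [simp]: "is_Add (assoc_nf s) = is_Add s"
  by (cases s) auto

lemma is_Mul_assoc_nf [simp]: "is_Mul (assoc_nf s) = is_Mul s"
  by (cases s) auto

lemma add_append_neq_Cst [simp]: "add_append x y \<noteq> Cst c"
  by (induction x y rule: add_append.induct) auto

lemma mul_append_neq_Cst [simp]: "mul_append x y \<noteq> Cst c"
  by (induction x y rule: mul_append.induct) auto

lemma assoc_nf_eq_Cst_iff [simp]: "assoc_nf s = Cst c \<longleftrightarrow> s = Cst c"
  by (cases s) auto

lemma summands_not_Add: "\<not> is_Add s \<Longrightarrow> summands s = [s]"
  by (cases s) auto

lemma factors_not_Mul: "\<not> is_Mul s \<Longrightarrow> factors s = [s]"
  by (cases s) auto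

lemma summands_add_append: "summands (add_append x y) = summands x @ summands y"
  by (induction x y rule: add_append.induct) auto

lemma factors_mul_append: "factors (mul_append x y) = factors x @ factors y"
  by (induction x y rule: mul_append.induct) auto

lemma summands_assoc_nf: "summands (assoc_nf s) = map assoc_nf (summands s)"
  by (induction s) (auto simp: summands_add_append summands_not_Add)

lemma factors_assoc_nf: "factors (assoc_nf s) = map assoc_nf (factors s)"
  by (induction s) (auto simp: factors_mul_append factors_not_Mul)

lemma not_is_Add_summands: "x \<in> set (summands s) \<Longrightarrow> \<not> is_Add x"
  by (induction s rule: summands.induct) auto

lemma not_is_Mul_factors: "x \<in> set (factors s) \<Longrightarrow> \<not> is_Mul x"
  by (induction s rule: factors.induct) auto

lemma summands_neq_Nil [simp]: "summands s \<noteq> []"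
  by (induction s rule: summands.induct) auto

lemma factors_neq_Nil [simp]: "factors s \<noteq> []"
  by (induction s rule: factors.induct) auto

lemma summands_mk_sum_concat: "L \<noteq> [] \<Longrightarrow> summands (mk_sum L) = concat (map summands L)"
  by (induction L rule: mk_sum.induct) auto

lemma concat_map_summands_id: "\<forall>x\<in>set L. \<not> is_Add x \<Longrightarrow> concat (map summands L) = L"
  by (induction L) (auto simp: summands_not_Add)

lemma summands_mk_sum: "L \<noteq> [] \<Longrightarrow> \<forall>x\<in>set L. \<not> is_Add x \<Longrightarrow> summands (mk_sum L) = L"
  by (simp add: summands_mk_sum_concat concat_map_summands_id)

lemma factors_mk_prod: "L \<noteq> [] \<Longrightarrow> \<forall>x\<in>set L. \<not> is_Mul x \<Longrightarrow> factors (mk_prod L) = L"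
  by (induction L rule: mk_prod.induct) (auto simp: factors_not_Mul)

lemma add_append_mk_sum:
  "A \<noteq> [] \<Longrightarrow> B \<noteq> [] \<Longrightarrow> \<forall>x\<in>set A. \<not> is_Add x \<Longrightarrow>
   add_append (mk_sum A) (mk_sum B) = mk_sum (A @ B)"
proof (induction A rule: mk_sum.induct)
  case (2 t) then show ?case by (cases t; cases B) auto
next
  case (3 t v va) then show ?case by (cases t; cases B) auto
qed auto

lemma mul_append_mk_prod:
  "A \<noteq> [] \<Longrightarrow> B \<noteq> [] \<Longrightarrow> \<forall>x\<in>set A. \<not> is_Mul x \<Longrightarrow>
   mul_append (mk_prod A) (mk_prod B) = mk_prod (A @ B)"
proof (induction A rule: mk_prod.induct)
  case (2 t) then show ?case by (cases t; cases B) auto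
next
  case (3 t v va) then show ?case by (cases t; cases B) auto
qed auto

lemma assoc_nf_mk_sum: "assoc_nf s = mk_sum (map assoc_nf (summands s))"
proof (induction s)
  case (Add a b)
  have "assoc_nf (Add a b) =
      add_append (mk_sum (map assoc_nf (summands a))) (mk_sum (map assoc_nf (summands b)))"
    using Add by simp
  also have "\<dots> = mk_sum (map assoc_nf (summands a) @ map assoc_nf (summands b))"
    by (rule add_append_mk_sum) (auto dest: not_is_Add_summands)
  finally show ?case by simp
qed auto

lemma assoc_nf_mk_prod: "assoc_nf s = mk_prod (map assoc_nf (factors s))"
proof (induction s)
  case (Mul a b)
  have "assoc_nf (Mul a b) =
      mul_append (mk_prod (map assoc_nf (factors a))) (mk_prod (map assoc_nf (factors b)))"
    using Mul by simp
  also have "\<dots> = mk_prod (map assoc_nf (factors a) @ map assoc_nf (factors b))"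
    by (rule mul_append_mk_prod) (auto dest: not_is_Mul_factors)
  finally show ?case by simp
qed auto

lemma assoc_nf_eqI_summands:
  fixes s t :: "('c::zero, 'v, 'f) trm"
  shows "map assoc_nf (summands s) = map assoc_nf (summands t) \<Longrightarrow> assoc_nf s = assoc_nf t"
  by (metis assoc_nf_mk_sum)

lemma assoc_nf_eqI_factors:
  fixes s t :: "('c::one, 'v, 'f) trm"
  shows "map assoc_nf (factors s) = map assoc_nf (factors t) \<Longrightarrow> assoc_nf s = assoc_nf t"
  by (metis assoc_nf_mk_prod)

lemma assoc_nf_idem [simp]: "assoc_nf (assoc_nf s) = assoc_nf s"
  by (metis aeq_iff_assoc_nf_eq aeq_assoc_nf)

lemma Cst_in_summands_assoc_nf_iff:
  "Cst c \<in> set (summands (assoc_nf a)) \<longleftrightarrow> Cst c \<in> set (summands a)"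
  unfolding summands_assoc_nf set_map image_iff by (metis assoc_nf.simps(1) assoc_nf_eq_Cst_iff)

lemma Cst_in_factors_assoc_nf_iff:
  "Cst c \<in> set (factors (assoc_nf a)) \<longleftrightarrow> Cst c \<in> set (factors a)"
  unfolding factors_assoc_nf set_map image_iff by (metis assoc_nf.simps(1) assoc_nf_eq_Cst_iff)

lemma rstep_Add_left: "rstep R a b \<Longrightarrow> rstep R (Add a c) (Add b c)"
  unfolding rstep_def by (blast intro: aeq_add aeq_refl ctx_step.add_l)

lemma rstep_Add_right: "rstep R a b \<Longrightarrow> rstep R (Add c a) (Add c b)"
  unfolding rstep_def by (blast intro: aeq_add aeq_refl ctx_step.add_r)

lemma rstep_Mul_left: "rstep R a b \<Longrightarrow> rstep R (Mul a c) (Mul b c)"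
  unfolding rstep_def by (blast intro: aeq_mul aeq_refl ctx_step.mul_l)

lemma rstep_Mul_right: "rstep R a b \<Longrightarrow> rstep R (Mul c a) (Mul c b)"
  unfolding rstep_def by (blast intro: aeq_mul aeq_refl ctx_step.mul_r)

lemma rstep_Aff: "rstep R a b \<Longrightarrow> rstep R (Aff f a) (Aff f b)"
  unfolding rstep_def by (blast intro: aeq_aff ctx_step.aff)

lemma rstep_root: "R a b \<Longrightarrow> rstep R a b"
  unfolding rstep_def by (blast intro: aeq_refl ctx_step.root)

lemma rtranclp_map:
  assumes "\<And>a b. r a b \<Longrightarrow> r (f a) (f b)" and "r\<^sup>*\<^sup>* a b"
  shows "r\<^sup>*\<^sup>* (f a) (f b)"
  using assms(2) by induction (auto intro: rtranclp.rtrancl_into_rtrancl assms(1))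

lemma rsteps_Add: "(rstep R)\<^sup>*\<^sup>* a b \<Longrightarrow> (rstep R)\<^sup>*\<^sup>* c d \<Longrightarrow> (rstep R)\<^sup>*\<^sup>* (Add a c) (Add b d)"
  using rtranclp_map[of "rstep R" "\<lambda>x. Add x c" a b] rtranclp_map[of "rstep R" "Add b" c d]
  by (meson rstep_Add_left rstep_Add_right rtranclp_trans)

lemma rsteps_Mul: "(rstep R)\<^sup>*\<^sup>* a b \<Longrightarrow> (rstep R)\<^sup>*\<^sup>* c d \<Longrightarrow> (rstep R)\<^sup>*\<^sup>* (Mul a c) (Mul b d)"
  using rtranclp_map[of "rstep R" "\<lambda>x. Mul x c" a b] rtranclp_map[of "rstep R" "Mul b" c d]
  by (meson rstep_Mul_left rstep_Mul_right rtranclp_trans)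

lemma rsteps_Aff: "(rstep R)\<^sup>*\<^sup>* a b \<Longrightarrow> (rstep R)\<^sup>*\<^sup>* (Aff f a) (Aff f b)"
  by (rule rtranclp_map[of "rstep R" "Aff f"]) (rule rstep_Aff)

lemma is_nf_AddD: "is_nf R (Add a b) \<Longrightarrow> is_nf R a \<and> is_nf R b"
  unfolding is_nf_def using rstep_Add_left rstep_Add_right by blast

lemma is_nf_MulD: "is_nf R (Mul a b) \<Longrightarrow> is_nf R a \<and> is_nf R b"
  unfolding is_nf_def using rstep_Mul_left rstep_Mul_right by blast

lemma is_nf_AffD: "is_nf R (Aff f a) \<Longrightarrow> is_nf R a"
  unfolding is_nf_def using rstep_Aff by metis

lemma is_nf_not_root: "is_nf R a \<Longrightarrow> \<not> R a b"
  unfolding is_nf_def using rstep_root by blast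

lemma is_nf_rulesD: "is_nf (rules ges lam I) s \<Longrightarrow> i \<in> I \<Longrightarrow> \<forall>t. \<not> rule ges lam i s t"
  using is_nf_not_root[of "rules ges lam I" s] unfolding rules_def by blast

lemma ctx_step_mono: "ctx_step R s t \<Longrightarrow> (\<And>a b. R a b \<Longrightarrow> R' a b) \<Longrightarrow> ctx_step R' s t"
  by (induction rule: ctx_step.induct) (auto intro: ctx_step.intros)

lemma rstep_mono: "rstep R s t \<Longrightarrow> (\<And>a b. R a b \<Longrightarrow> R' a b) \<Longrightarrow> rstep R' s t"
  unfolding rstep_def using ctx_step_mono by blast

lemma rsteps_mono: "(rstep R)\<^sup>*\<^sup>* s t \<Longrightarrow> (\<And>a b. R a b \<Longrightarrow> R' a b) \<Longrightarrow> (rstep R')\<^sup>*\<^sup>* s t"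
  by (induction rule: rtranclp_induct) (auto intro: rtranclp.rtrancl_into_rtrancl rstep_mono)

lemma is_nf_mono: "is_nf R' s \<Longrightarrow> (\<And>a b. R a b \<Longrightarrow> R' a b) \<Longrightarrow> is_nf R s"
  unfolding is_nf_def using rstep_mono by blast

lemma is_nf_by_invariant:
  assumes aeq_inv: "\<And>s s'. aeq s s' \<Longrightarrow> P s \<Longrightarrow> P s'"
    and Add_inv: "\<And>a b. P (Add a b) \<Longrightarrow> P a \<and> P b"
    and Mul_inv: "\<And>a b. P (Mul a b) \<Longrightarrow> P a \<and> P b"
    and Aff_inv: "\<And>f a. P (Aff f a) \<Longrightarrow> P a"
    and no_root_redex: "\<And>s t. P s \<Longrightarrow> R s t \<Longrightarrow> False"
    and "P s"
  shows "is_nf R s"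
proof -
  have "ctx_step R s' t' \<Longrightarrow> P s' \<Longrightarrow> False" for s' t'
    by (induction rule: ctx_step.induct) (use Add_inv Mul_inv Aff_inv no_root_redex in blast)+
  then show ?thesis unfolding is_nf_def rstep_def using aeq_inv \<open>P s\<close> by blast
qed

lemma rsteps_preserve:
  assumes aeq_inv: "\<And>s s'. aeq s s' \<Longrightarrow> P s \<Longrightarrow> P s'"
    and step_inv: "\<And>s t. ctx_step R s t \<Longrightarrow> P s \<Longrightarrow> P t"
  shows "(rstep R)\<^sup>*\<^sup>* s t \<Longrightarrow> P s \<Longrightarrow> P t"
proof (induction rule: rtranclp_induct)
  case (step y z)
  then show ?case unfolding rstep_def using aeq_inv step_inv by blast
qed

lemma nf_reachable_if_decreasing:
  assumes "\<And>s t. rstep R s t \<Longrightarrow> (w t :: nat) < w s"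
  shows "\<exists>t. (rstep R)\<^sup>*\<^sup>* s t \<and> is_nf R t"
proof (induction s rule: measure_induct_rule[of w])
  case (less s)
  show ?case
  proof (cases "is_nf R s")
    case False
    then obtain t where "rstep R s t" unfolding is_nf_def by blast
    with less assms obtain u where "(rstep R)\<^sup>*\<^sup>* t u" "is_nf R u" by blast
    with \<open>rstep R s t\<close> show ?thesis by (meson converse_rtranclp_into_rtranclp)
  qed blast
qed

lemma ctx_step_in_mk_sum:
  "R u v \<Longrightarrow> ctx_step R (mk_sum (A @ [u] @ B)) (mk_sum (A @ [v] @ B))"
proof (induction A)
  case Nil
  then show ?case by (cases B) (auto intro: ctx_step.intros)
next
  case (Cons a A)
  then show ?case by (cases "A @ [u] @ B"; cases "A @ [v] @ B") (auto intro: ctx_step.intros)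
qed

lemma ctx_step_redex_Add_not_plus_free:
  "ctx_step R s t \<Longrightarrow> (\<And>a b. R a b \<Longrightarrow> is_Add a) \<Longrightarrow> \<not> plus_free s"
proof (induction rule: ctx_step.induct)
  case (root s t)
  then have "is_Add s" by blast
  then show ?case by (cases s) auto
qed auto

section \<open>Total preorders, sorting and lexicographic comparison\<close>

definition total_preorder_on :: "'a set \<Rightarrow> ('a \<Rightarrow> 'a \<Rightarrow> bool) \<Rightarrow> bool" where
  "total_preorder_on A ge \<longleftrightarrow> (\<forall>x\<in>A. ge x x) \<and> (\<forall>x\<in>A. \<forall>y\<in>A. ge x y \<or> ge y x)
     \<and> (\<forall>x\<in>A. \<forall>y\<in>A. \<forall>z\<in>A. ge x y \<longrightarrow> ge y z \<longrightarrow> ge x z)"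

lemma total_preorder_onD:
  assumes "total_preorder_on A ge"
  shows "x \<in> A \<Longrightarrow> ge x x"
    and "x \<in> A \<Longrightarrow> y \<in> A \<Longrightarrow> ge x y \<or> ge y x"
    and "x \<in> A \<Longrightarrow> y \<in> A \<Longrightarrow> z \<in> A \<Longrightarrow> ge x y \<Longrightarrow> ge y z \<Longrightarrow> ge x z"
  using assms unfolding total_preorder_on_def by blast+

lemma total_order_relD:
  assumes "total_order_rel r"
  shows "r x x" and "r x y \<Longrightarrow> r y x \<Longrightarrow> x = y" and "r x y \<Longrightarrow> r y z \<Longrightarrow> r x z"
    and "r x y \<or> r y x"
  using assms unfolding total_order_rel_def by blast+

lemma total_preorder_on_inv_image:
  "total_preorder_on B ge \<Longrightarrow> h ` A \<subseteq> B \<Longrightarrow> total_preorder_on A (\<lambda>x y. ge (h x) (h y))"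
  unfolding total_preorder_on_def image_subset_iff by blast

lemma total_preorder_on_lex_prod:
  assumes "total_order_rel r" and "total_preorder_on A q"
  shows "total_preorder_on A (\<lambda>x y. (k x \<noteq> k y \<and> r (k x) (k y)) \<or> (k x = k y \<and> q x y))"
  using assms unfolding total_preorder_on_def total_order_rel_def by (smt (verit))

lemma total_preorder_onI_local:
  assumes "\<And>x y z. x \<in> A \<Longrightarrow> y \<in> A \<Longrightarrow> z \<in> A \<Longrightarrow>
    \<exists>B. x \<in> B \<and> y \<in> B \<and> z \<in> B \<and> total_preorder_on B ge"
  shows "total_preorder_on A ge"
  using assms unfolding total_preorder_on_def by (smt (verit))

lemma total_preorder_on_cong:
  "(\<And>x y. x \<in> A \<Longrightarrow> y \<in> A \<Longrightarrow> ge x y = ge' x y) \<Longrightarrow> total_preorder_on A ge' \<Longrightarrow>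
   total_preorder_on A ge"
  unfolding total_preorder_on_def by (smt (verit))

lemma sort_by_Cons: "sort_by ge (x # L) = insort_by ge x (sort_by ge L)"
  by (simp add: sort_by_def)

lemma sort_by_Nil [simp]: "sort_by ge [] = []"
  by (simp add: sort_by_def)

lemma set_insort_by [simp]: "set (insort_by ge x L) = insert x (set L)"
  by (induction L) auto

lemma set_sort_by [simp]: "set (sort_by ge L) = set L"
  by (induction L) (auto simp: sort_by_def)

lemma length_insort_by [simp]: "length (insort_by ge x L) = Suc (length L)"
  by (induction L) auto

lemma length_sort_by [simp]: "length (sort_by ge L) = length L"
  by (induction L) (auto simp: sort_by_def)

lemma sort_by_eq_Nil_iff [simp]: "sort_by ge L = [] \<longleftrightarrow> L = []"
  by (metis length_sort_by length_0_conv)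

lemma sort_by_length_le_1: "length L \<le> 1 \<Longrightarrow> sort_by ge L = L"
  by (cases L) (auto simp: sort_by_def)

lemma sorted_insort_by:
  assumes "total_preorder_on A ge" "x \<in> A" "set L \<subseteq> A" "sorted_wrt ge L"
  shows "sorted_wrt ge (insort_by ge x L)"
  using assms(3,4)
proof (induction L)
  case (Cons y L)
  note ge = total_preorder_onD[OF assms(1)]
  show ?case
  proof (cases "ge x y")
    case True
    then have "\<forall>z\<in>set L. ge x z" using Cons.prems ge(3)[OF assms(2)] by auto
    with True Cons.prems show ?thesis by simp
  next
    case False
    then have "ge y x" using ge(2)[OF assms(2), of y] Cons.prems by auto
    with False Cons show ?thesis by simp
  qed
qed simp

lemma sorted_sort_by: "total_preorder_on A ge \<Longrightarrow> set L \<subseteq> A \<Longrightarrow> sorted_wrt ge (sort_by ge L)"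
proof (induction L)
  case (Cons a L)
  then show ?case using sorted_insort_by[of A ge a "sort_by ge L"] by (simp add: sort_by_Cons)
qed simp

lemma sort_by_sorted_id: "sorted_wrt ge L \<Longrightarrow> sort_by ge L = L"
proof (induction L)
  case (Cons x L)
  then show ?case by (cases L) (auto simp: sort_by_Cons)
qed simp

lemma sort_by_eq_iff_sorted:
  "total_preorder_on A ge \<Longrightarrow> set L \<subseteq> A \<Longrightarrow> sort_by ge L = L \<longleftrightarrow> sorted_wrt ge L"
  using sorted_sort_by sort_by_sorted_id by metis

lemma sort_by_cong:
  "\<forall>x\<in>set L. \<forall>y\<in>set L. ge x y = ge' x y \<Longrightarrow> sort_by ge L = sort_by ge' L"
proof (induction L)
  case (Cons x L)
  have "insort_by ge x L' = insort_by ge' x L'" if "set L' \<subseteq> set L" for L'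
    using that Cons.prems by (induction L') auto
  with Cons show ?case by (simp add: sort_by_Cons)
qed simp

lemma sort_by_map:
  "\<forall>x\<in>set L. \<forall>y\<in>set L. ge (f x) (f y) = ge x y \<Longrightarrow> sort_by ge (map f L) = map f (sort_by ge L)"
proof (induction L)
  case (Cons x L)
  have "insort_by ge (f x) (map f L') = map f (insort_by ge x L')" if "set L' \<subseteq> set L" for L'
    using that Cons.prems by (induction L') auto
  with Cons show ?case by (simp add: sort_by_Cons)
qed simp

lemma lex_ge_Cons_Cons:
  "lex_ge ge (x # xs) (y # ys) \<longleftrightarrow> ge x y \<and> (\<not> ge y x \<or> lex_ge ge xs ys)"
  by auto

lemma lex_ge_cong:
  "\<forall>x\<in>set xs. \<forall>y\<in>set ys. ge x y = ge' x y \<and> ge y x = ge' y x \<Longrightarrow>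
   lex_ge ge xs ys = lex_ge ge' xs ys"
  by (induction ge xs ys rule: lex_ge.induct) auto

lemma lex_ge_map:
  "\<forall>x\<in>set xs. \<forall>y\<in>set ys. ge (f x) (f y) = ge x y \<and> ge (f y) (f x) = ge y x \<Longrightarrow>
   lex_ge ge (map f xs) (map f ys) = lex_ge ge xs ys"
  by (induction ge xs ys rule: lex_ge.induct) auto

lemma lex_ge_antisym_map:
  assumes "lex_ge ge xs ys" and "lex_ge ge ys xs"
    and "\<And>x y. x \<in> set xs \<Longrightarrow> y \<in> set ys \<Longrightarrow> ge x y \<Longrightarrow> ge y x \<Longrightarrow> h x = h y"
  shows "map h xs = map h ys"
  using assms by (induction ge xs ys rule: lex_ge.induct) (auto split: if_splits)

lemma sorted_wrt_no_square:
  assumes "sorted_wrt ge xs"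
    and "\<And>x y. x \<in> set xs \<Longrightarrow> y \<in> set xs \<Longrightarrow> ge x y \<Longrightarrow> ge y x \<Longrightarrow> x = y"
    and "\<nexists>A x B. xs = A @ [x, x] @ B"
  shows "\<nexists>A L B. L \<noteq> [] \<and> xs = A @ L @ L @ B"
proof
  assume "\<exists>A L B. L \<noteq> [] \<and> xs = A @ L @ L @ B"
  then obtain A x L B where xs: "xs = A @ (x # L) @ (x # L) @ B"
    by (metis neq_Nil_conv)
  show False
  proof (cases L)
    case Nil
    then have "xs = A @ [x, x] @ B" using xs by simp
    then show False using assms(3) by blast
  next
    case (Cons y L')
    have "sorted_wrt ge ((x # y # L') @ (x # L @ B))"
      using assms(1) sorted_wrt_append[of ge A] unfolding xs Cons by simp
    then have "ge x y" "ge y x" unfolding sorted_wrt_append by auto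
    then have "x = y" using assms(2)[of x y] xs Cons by simp
    then have "xs = A @ [x, x] @ (L' @ x # L @ B)" using xs Cons by simp
    then show False using assms(3) by blast
  qed
qed

lemma total_preorder_on_lex_ge:
  assumes A: "total_preorder_on A ge"
  shows "total_preorder_on {xs. set xs \<subseteq> A} (lex_ge ge)"
proof -
  note ge = total_preorder_onD[OF A]
  have refl: "lex_ge ge xs xs" if "set xs \<subseteq> A" for xs
    using that ge(1) by (induction xs) auto
  have total: "lex_ge ge xs ys \<or> lex_ge ge ys xs" if "set xs \<subseteq> A" "set ys \<subseteq> A" for xs ys
    using that
  proof (induction xs arbitrary: ys)
    case Nil
    then show ?case by (cases ys) auto
  next
    case (Cons x xs)
    then show ?case using ge(2) by (cases ys) auto
  qed
  have trans: "lex_ge ge xs zs"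
    if "set xs \<subseteq> A" "set ys \<subseteq> A" "set zs \<subseteq> A" "lex_ge ge xs ys" "lex_ge ge ys zs" for xs ys zs
    using that
  proof (induction xs arbitrary: ys zs)
    case Nil
    then show ?case by (cases ys) auto
  next
    case (Cons x xs)
    show ?case
    proof (cases ys)
      case Nil
      then show ?thesis using Cons.prems by (cases zs) auto
    next
      case ys: (Cons y ys')
      show ?thesis
      proof (cases zs)
        case zs: (Cons z zs')
        have "x \<in> A" "y \<in> A" "z \<in> A" using Cons.prems ys zs by auto
        with Cons.prems Cons.IH[of ys' zs'] ys zs ge(3)[of x y z] ge(3)[of y z x] ge(3)[of z x y]
        show ?thesis by (auto simp: lex_ge_Cons_Cons simp del: lex_ge.simps(4))
      qed simp
    qed
  qed
  show ?thesis
    unfolding total_preorder_on_def using refl total trans by blast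
qed

section \<open>The factor and monomial orders\<close>

fun aff_depth :: "('c, 'v, 'f) trm \<Rightarrow> nat" where
  "aff_depth (Cst c) = 0"
| "aff_depth (Var v) = 0"
| "aff_depth (Add a b) = max (aff_depth a) (aff_depth b)"
| "aff_depth (Mul a b) = max (aff_depth a) (aff_depth b)"
| "aff_depth (Aff f t) = Suc (aff_depth t)"

lemma aff_depth_factors: "x \<in> set (factors t) \<Longrightarrow> aff_depth x \<le> aff_depth t"
  by (induction t rule: factors.induct) auto

lemma aff_depth_less_size: "aff_depth x < size x"
  by (induction x) auto

lemma ge_l_fuel_cong:
  "aff_depth a < k \<Longrightarrow> aff_depth b < k \<Longrightarrow> aff_depth a < k' \<Longrightarrow> aff_depth b < k' \<Longrightarrow>
   ge_l_fuel ges k a b = ge_l_fuel ges k' a b"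
proof (induction k arbitrary: k' a b)
  case (Suc n)
  obtain n' where k': "k' = Suc n'" using Suc.prems by (cases k') auto
  show ?case
  proof (cases "\<exists>f t g u. a = Aff f t \<and> b = Aff g u")
    case True
    then obtain f t g u where ab: "a = Aff f t" "b = Aff g u" by blast
    have "\<forall>x\<in>set (factors t) \<union> set (factors u). aff_depth x < n \<and> aff_depth x < n'"
      using Suc.prems ab k' aff_depth_factors by fastforce
    then have "ge_l_fuel ges n x y = ge_l_fuel ges n' x y"
      if "x \<in> set (factors t) \<union> set (factors u)" "y \<in> set (factors t) \<union> set (factors u)" for x y
      using Suc.IH that by blast
    then show ?thesis
      using ab k' sort_by_cong[of "factors t" "ge_l_fuel ges n" "ge_l_fuel ges n'"]
        sort_by_cong[of "factors u" "ge_l_fuel ges n" "ge_l_fuel ges n'"]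
        lex_ge_cong[of "sort_by (ge_l_fuel ges n') (factors t)" "sort_by (ge_l_fuel ges n') (factors u)"
          "ge_l_fuel ges n" "ge_l_fuel ges n'"]
      by simp
  next
    case False
    then show ?thesis using k' by (cases a; cases b) auto
  qed
qed simp

lemma ge_l_fuel_eq_ge_l:
  "aff_depth x < n \<Longrightarrow> aff_depth y < n \<Longrightarrow> ge_l_fuel ges n x y = ge_l ges x y"
  unfolding ge_l_def using aff_depth_less_size[of x] aff_depth_less_size[of y]
  by (intro ge_l_fuel_cong) auto

fun head_sym :: "('c, 'v, 'f) trm \<Rightarrow> ('c, 'v, 'f) sym option" where
  "head_sym (Cst c) = Some (SConst c)"
| "head_sym (Var v) = Some (SVar v)"
| "head_sym (Aff f t) = Some (SAff f)"
| "head_sym (Add a b) = None"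
| "head_sym (Mul a b) = None"

fun arg_list :: "(('c, 'v, 'f) sym \<Rightarrow> ('c, 'v, 'f) sym \<Rightarrow> bool) \<Rightarrow> ('c, 'v, 'f) trm
    \<Rightarrow> ('c, 'v, 'f) trm list" where
  "arg_list ges (Aff f t) = sort_by (ge_l ges) (factors t)"
| "arg_list ges _ = []"

lemma ge_l_head_sym:
  assumes "total_order_rel ges"
  shows "ge_l ges a b = (case (head_sym a, head_sym b) of
      (Some s, Some s') \<Rightarrow>
        (s \<noteq> s' \<and> ges s s') \<or> (s = s' \<and> lex_ge (ge_l ges) (arg_list ges a) (arg_list ges b))
    | _ \<Rightarrow> False)"
proof -
  define n where "n = max (aff_depth a) (aff_depth b)"
  have fuel: "ge_l ges a b = ge_l_fuel ges (Suc n) a b"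
    unfolding n_def by (rule ge_l_fuel_eq_ge_l[symmetric]) auto
  show ?thesis
  proof (cases "\<exists>f t g u. a = Aff f t \<and> b = Aff g u")
    case True
    then obtain f t g u where ab: "a = Aff f t" "b = Aff g u" by blast
    have "\<forall>x\<in>set (factors t) \<union> set (factors u). aff_depth x < n"
      using ab aff_depth_factors unfolding n_def by fastforce
    then have "\<forall>x\<in>set (factors t) \<union> set (factors u). \<forall>y\<in>set (factors t) \<union> set (factors u).
        ge_l_fuel ges n x y = ge_l ges x y"
      by (simp add: ge_l_fuel_eq_ge_l)
    then show ?thesis
      using fuel ab sort_by_cong[of "factors t" "ge_l_fuel ges n" "ge_l ges"]
        sort_by_cong[of "factors u" "ge_l_fuel ges n" "ge_l ges"]
        lex_ge_cong[of "sort_by (ge_l ges) (factors t)" "sort_by (ge_l ges) (factors u)"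
          "ge_l_fuel ges n" "ge_l ges"]
      by simp
  next
    case False
    then show ?thesis
      using fuel total_order_relD(1)[OF assms] by (cases a; cases b) auto
  qed
qed

lemma ge_l_Some_head_sym:
  assumes "total_order_rel ges" and "head_sym x = Some s" and "head_sym y = Some s'"
  shows "ge_l ges x y \<longleftrightarrow>
    (s \<noteq> s' \<and> ges s s') \<or> (s = s' \<and> lex_ge (ge_l ges) (arg_list ges x) (arg_list ges y))"
  using ge_l_head_sym[OF assms(1), of x y] assms(2,3) by simp

lemma head_sym_eq_Some_SAff: "head_sym x = Some (SAff f) \<longleftrightarrow> (\<exists>t. x = Aff f t)"
  by (cases x) auto

lemma is_factor_head_sym: "is_factor x \<Longrightarrow> \<exists>s. head_sym x = Some s"
  by (cases x) auto

lemma plus_free_factors_is_factor: "plus_free t \<Longrightarrow> x \<in> set (factors t) \<Longrightarrow> is_factor x"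
  by (induction t rule: factors.induct) auto

lemma arg_list_subset:
  "is_factor x \<Longrightarrow> set (arg_list ges x) \<subseteq> {y. is_factor y \<and> aff_depth y < aff_depth x}"
  using aff_depth_factors
  by (cases x) (fastforce simp: less_Suc_eq_le plus_free_factors_is_factor)+

lemma total_preorder_on_ge_l_step:
  assumes tor: "total_order_rel ges" and B: "total_preorder_on B (ge_l ges)"
    and A: "\<And>x. x \<in> A \<Longrightarrow> is_factor x \<and> set (arg_list ges x) \<subseteq> B"
  shows "total_preorder_on A (ge_l ges)"
proof -
  define key where "key x = the (head_sym x)" for x :: "('a, 'b, 'c) trm"
  have "arg_list ges ` A \<subseteq> {xs. set xs \<subseteq> B}"
    using A by auto
  then have "total_preorder_on A (\<lambda>x y. lex_ge (ge_l ges) (arg_list ges x) (arg_list ges y))"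
    by (rule total_preorder_on_inv_image[OF total_preorder_on_lex_ge[OF B]])
  then have "total_preorder_on A (\<lambda>x y. (key x \<noteq> key y \<and> ges (key x) (key y))
      \<or> (key x = key y \<and> lex_ge (ge_l ges) (arg_list ges x) (arg_list ges y)))"
    by (rule total_preorder_on_lex_prod[OF tor])
  moreover have "ge_l ges x y \<longleftrightarrow> (key x \<noteq> key y \<and> ges (key x) (key y))
      \<or> (key x = key y \<and> lex_ge (ge_l ges) (arg_list ges x) (arg_list ges y))"
    if xy: "x \<in> A" "y \<in> A" for x y
  proof -
    have "is_factor x" "is_factor y" using A xy by simp_all
    then obtain s s' where hs: "head_sym x = Some s" "head_sym y = Some s'"
      using is_factor_head_sym by metis
    show ?thesis unfolding key_def hs option.sel by (rule ge_l_Some_head_sym[OF tor hs])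
  qed
  ultimately show ?thesis
    by (rule total_preorder_on_cong[rotated])
qed

lemma total_preorder_on_factors_of_depth:
  assumes "total_order_rel ges"
  shows "total_preorder_on {x. is_factor x \<and> aff_depth x \<le> n} (ge_l ges)"
proof (induction n)
  case 0
  show ?case
    by (rule total_preorder_on_ge_l_step[OF assms, of "{}"])
      (auto simp: total_preorder_on_def dest: arg_list_subset)
next
  case (Suc n)
  show ?case
    by (rule total_preorder_on_ge_l_step[OF assms Suc.IH]) (auto dest!: arg_list_subset)
qed

lemma total_preorder_on_factors:
  assumes "total_order_rel ges"
  shows "total_preorder_on {x. is_factor x} (ge_l ges)"
proof (rule total_preorder_onI_local)
  fix x y z :: "('a, 'b, 'c) trm"
  assume "x \<in> {x. is_factor x}" "y \<in> {x. is_factor x}" "z \<in> {x. is_factor x}"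
  moreover define d where "d = max (aff_depth x) (max (aff_depth y) (aff_depth z))"
  ultimately show "\<exists>B. x \<in> B \<and> y \<in> B \<and> z \<in> B \<and> total_preorder_on B (ge_l ges)"
    using total_preorder_on_factors_of_depth[OF assms, of d]
    by (intro exI[of _ "{w. is_factor w \<and> aff_depth w \<le> d}"]) auto
qed

lemma head_sym_add_append [simp]: "head_sym (add_append x y) = None"
  by (induction x y rule: add_append.induct) auto

lemma head_sym_mul_append [simp]: "head_sym (mul_append x y) = None"
  by (induction x y rule: mul_append.induct) auto

lemma head_sym_assoc_nf [simp]: "head_sym (assoc_nf x) = head_sym x"
  by (cases x) auto

lemma arg_list_add_append [simp]: "arg_list ges (add_append x y) = []"
  by (induction x y rule: add_append.induct) auto

lemma arg_list_mul_append [simp]: "arg_list ges (mul_append x y) = []"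
  by (induction x y rule: mul_append.induct) auto

lemma aff_depth_arg_list: "a \<in> set (arg_list ges x) \<Longrightarrow> aff_depth a < aff_depth x"
  using aff_depth_factors by (cases x) (fastforce simp: less_Suc_eq_le)+

lemma ge_l_assoc_nf:
  assumes tor: "total_order_rel ges"
  shows "ge_l ges (assoc_nf x) (assoc_nf y) = ge_l ges x y"
proof (induction "max (aff_depth x) (aff_depth y)" arbitrary: x y rule: less_induct)
  case less
  have IH: "ge_l ges (assoc_nf a) (assoc_nf b) = ge_l ges a b"
    if "a \<in> set (arg_list ges x) \<union> set (arg_list ges y)"
      and "b \<in> set (arg_list ges x) \<union> set (arg_list ges y)" for a b
  proof -
    have "max (aff_depth a) (aff_depth b) < max (aff_depth x) (aff_depth y)"
      using that aff_depth_arg_list by fastforce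
    then show ?thesis by (rule less.hyps)
  qed
  have arg: "arg_list ges (assoc_nf z) = map assoc_nf (arg_list ges z)" if "z = x \<or> z = y" for z
  proof (cases z)
    case (Aff f t)
    then have "\<forall>a\<in>set (factors t). \<forall>b\<in>set (factors t). ge_l ges (assoc_nf a) (assoc_nf b) = ge_l ges a b"
      using IH that by auto
    then show ?thesis
      using Aff by (simp add: factors_assoc_nf sort_by_map)
  qed simp_all
  have lex: "lex_ge (ge_l ges) (arg_list ges (assoc_nf x)) (arg_list ges (assoc_nf y))
      = lex_ge (ge_l ges) (arg_list ges x) (arg_list ges y)"
    using arg IH by (simp add: lex_ge_map)
  show ?case
    unfolding ge_l_head_sym[OF tor, of "assoc_nf x"] ge_l_head_sym[OF tor, of x] head_sym_assoc_nf lex ..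
qed

lemma ge_p_assoc_nf:
  assumes tor: "total_order_rel ges"
  shows "ge_p ges (assoc_nf x) (assoc_nf y) = ge_p ges x y"
  using ge_l_assoc_nf[OF tor]
  by (simp add: ge_p_def factors_assoc_nf sort_by_map lex_ge_map)

lemma total_preorder_on_monomials:
  assumes "total_order_rel ges"
  shows "total_preorder_on {m. \<forall>x\<in>set (factors m). is_factor x} (ge_p ges)"
  unfolding ge_p_def
  using total_preorder_on_lex_ge[OF total_preorder_on_factors[OF assms]]
  by (rule total_preorder_on_inv_image) auto

section \<open>Invariants of TermNorm\<close>

fun normal_prod :: "('c::{zero,one}, 'v, 'f) trm \<Rightarrow> bool" where
  "normal_prod (Cst c) = True"
| "normal_prod (Var v) = True"
| "normal_prod (Add a b) = False"
| "normal_prod (Mul a b) = (normal_prod a \<and> normal_prod b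
     \<and> Cst 0 \<notin> set (factors a @ factors b) \<and> Cst 1 \<notin> set (factors a @ factors b))"
| "normal_prod (Aff f t) = (normal_prod t \<and> t \<noteq> Cst 0)"

fun normal_sum :: "('c::{zero,one}, 'v, 'f) trm \<Rightarrow> bool" where
  "normal_sum (Add a b) = (normal_sum a \<and> normal_sum b)"
| "normal_sum t = normal_prod t"

definition no_proper_zero_summand :: "('c::zero, 'v, 'f) trm \<Rightarrow> bool" where
  "no_proper_zero_summand s \<longleftrightarrow> (Cst 0 \<in> set (summands s) \<longrightarrow> s = Cst 0)"

fun products_sorted :: "(('c, 'v, 'f) sym \<Rightarrow> ('c, 'v, 'f) sym \<Rightarrow> bool) \<Rightarrow> ('c, 'v, 'f) trm \<Rightarrow> bool"
  where
  "products_sorted ges (Cst c) = True"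
| "products_sorted ges (Var v) = True"
| "products_sorted ges (Add a b) = (products_sorted ges a \<and> products_sorted ges b)"
| "products_sorted ges (Mul a b) = (products_sorted ges a \<and> products_sorted ges b
     \<and> sorted_wrt (ge_l ges) (factors a @ factors b))"
| "products_sorted ges (Aff f t) = products_sorted ges t"

text \<open>Zero summands are ignored: in the last phase R3 creates them before R6 and R7
  remove them.\<close>
fun sums_sorted :: "(('c::zero, 'v, 'f) sym \<Rightarrow> ('c, 'v, 'f) sym \<Rightarrow> bool) \<Rightarrow> ('c, 'v, 'f) trm \<Rightarrow> bool"
  where
  "sums_sorted ges (Cst c) = True"
| "sums_sorted ges (Var v) = True"
| "sums_sorted ges (Add a b) = (sums_sorted ges a \<and> sums_sorted ges b
     \<and> sorted_wrt (ge_p ges) (filter (\<lambda>x. x \<noteq> Cst 0) (summands a @ summands b)))"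
| "sums_sorted ges (Mul a b) = (sums_sorted ges a \<and> sums_sorted ges b)"
| "sums_sorted ges (Aff f t) = sums_sorted ges t"

text \<open>Modulo associativity, R3 applies to every block \<open>\<tau> \<oplus> \<tau>\<close> of consecutive summands.\<close>
definition no_repeated_block :: "('c, 'v, 'f) trm \<Rightarrow> bool" where
  "no_repeated_block s \<longleftrightarrow> \<not> (\<exists>A L B. L \<noteq> [] \<and> map assoc_nf (summands s) = A @ L @ L @ B)"

lemma normal_prod_normal_sum_aeq:
  "aeq s t \<Longrightarrow> (normal_prod s \<longleftrightarrow> normal_prod t) \<and> (normal_sum s \<longleftrightarrow> normal_sum t)"
proof (induction rule: aeq.induct)
  case (aeq_mul a a' b b')
  then have "Cst c \<in> set (factors a) \<longleftrightarrow> Cst c \<in> set (factors a')"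
      and "Cst c \<in> set (factors b) \<longleftrightarrow> Cst c \<in> set (factors b')" for c
    by (metis aeq_imp_assoc_nf_eq Cst_in_factors_assoc_nf_iff)+
  with aeq_mul.IH show ?case by simp
next
  case (aeq_aff a a' f)
  then have "a = Cst 0 \<longleftrightarrow> a' = Cst 0" by (metis aeq_imp_assoc_nf_eq assoc_nf_eq_Cst_iff)
  with aeq_aff.IH show ?case by simp
qed auto

lemma no_proper_zero_summand_aeq:
  assumes "aeq s t" and "no_proper_zero_summand s"
  shows "no_proper_zero_summand t"
proof -
  have eq: "assoc_nf s = assoc_nf t" using assms(1) by (rule aeq_imp_assoc_nf_eq)
  then have "Cst 0 \<in> set (summands t) \<longleftrightarrow> Cst 0 \<in> set (summands s)"
    by (metis Cst_in_summands_assoc_nf_iff)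
  moreover have "t = Cst 0 \<longleftrightarrow> s = Cst 0" using eq by (metis assoc_nf_eq_Cst_iff)
  ultimately show ?thesis using assms(2) unfolding no_proper_zero_summand_def by simp
qed

lemma products_sorted_aeq:
  assumes tor: "total_order_rel ges"
  shows "aeq s t \<Longrightarrow> products_sorted ges s \<longleftrightarrow> products_sorted ges t"
proof (induction rule: aeq.induct)
  case (aeq_assoc_mul a b c)
  then show ?case by (auto simp: sorted_wrt_append)
next
  case (aeq_mul a a' b b')
  have sorted: "sorted_wrt (ge_l ges) (factors x @ factors y) \<longleftrightarrow>
      sorted_wrt (ge_l ges) (factors (assoc_nf x) @ factors (assoc_nf y))" for x y
    by (simp add: factors_assoc_nf sorted_wrt_map ge_l_assoc_nf[OF tor] flip: map_append)
  show ?case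
    using aeq_mul.IH sorted[of a b] sorted[of a' b']
      aeq_imp_assoc_nf_eq[OF aeq_mul.hyps(1)] aeq_imp_assoc_nf_eq[OF aeq_mul.hyps(2)]
    by simp
qed auto

lemma filter_nonzero_map_assoc_nf:
  "filter (\<lambda>x. x \<noteq> Cst 0) (map assoc_nf L) = map assoc_nf (filter (\<lambda>x. x \<noteq> Cst 0) L)"
  by (induction L) auto

lemma sums_sorted_aeq:
  assumes tor: "total_order_rel ges"
  shows "aeq s t \<Longrightarrow> sums_sorted ges s \<longleftrightarrow> sums_sorted ges t"
proof (induction rule: aeq.induct)
  case (aeq_assoc_add a b c)
  then show ?case by (auto simp: sorted_wrt_append)
next
  case (aeq_add a a' b b')
  have sorted: "sorted_wrt (ge_p ges) (filter (\<lambda>x. x \<noteq> Cst 0) (summands x @ summands y)) \<longleftrightarrow>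
      sorted_wrt (ge_p ges)
        (filter (\<lambda>x. x \<noteq> Cst 0) (summands (assoc_nf x) @ summands (assoc_nf y)))"
    for x y
    by (simp add: summands_assoc_nf sorted_wrt_map ge_p_assoc_nf[OF tor] filter_nonzero_map_assoc_nf
        flip: map_append filter_append)
  show ?case
    using aeq_add.IH sorted[of a b] sorted[of a' b']
      aeq_imp_assoc_nf_eq[OF aeq_add.hyps(1)] aeq_imp_assoc_nf_eq[OF aeq_add.hyps(2)]
    by (simp del: filter_append)
qed auto

lemma no_repeated_block_aeq: "aeq s t \<Longrightarrow> no_repeated_block s \<Longrightarrow> no_repeated_block t"
  unfolding no_repeated_block_def using aeq_imp_assoc_nf_eq summands_assoc_nf by metis

lemma normal_prod_plus_free: "normal_prod x \<Longrightarrow> plus_free x"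
  by (induction x) auto

lemma plus_free_not_is_Add: "plus_free x \<Longrightarrow> \<not> is_Add x"
  by (cases x) auto

lemma normal_prod_not_is_Add: "normal_prod x \<Longrightarrow> \<not> is_Add x"
  by (cases x) auto

lemma normal_prod_normal_sum: "normal_prod s \<Longrightarrow> normal_sum s"
  by (cases s) auto

lemma normal_sum_not_is_Add: "\<not> is_Add s \<Longrightarrow> normal_sum s = normal_prod s"
  by (cases s) auto

lemma normal_prod_factors: "normal_prod s \<Longrightarrow> x \<in> set (factors s) \<Longrightarrow> normal_prod x"
  by (induction s rule: factors.induct) auto

lemma normal_prod_is_factor: "normal_prod x \<Longrightarrow> \<not> is_Mul x \<Longrightarrow> is_factor x"
  by (cases x) (auto dest: normal_prod_plus_free)

lemma normal_prod_factors_is_factor: "normal_prod s \<Longrightarrow> x \<in> set (factors s) \<Longrightarrow> is_factor x"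
  using normal_prod_factors not_is_Mul_factors normal_prod_is_factor by blast

lemma normal_prod_Mul_factors_neq_Cst:
  "normal_prod s \<Longrightarrow> is_Mul s \<Longrightarrow> Cst 0 \<notin> set (factors s) \<and> Cst 1 \<notin> set (factors s)"
  by (cases s) auto

lemma normal_prod_mk_prod:
  "L \<noteq> [] \<Longrightarrow> \<forall>x\<in>set L. normal_prod x \<and> \<not> is_Mul x \<and> x \<noteq> Cst 0 \<and> x \<noteq> Cst 1 \<Longrightarrow>
   normal_prod (mk_prod L)"
proof (induction L rule: mk_prod.induct)
  case (3 t v va)
  then show ?case by (auto simp: factors_mk_prod factors_not_Mul)
qed auto

lemma normal_sum_mk_sum: "\<forall>x\<in>set L. normal_sum x \<Longrightarrow> normal_sum (mk_sum L)"
  by (induction L rule: mk_sum.induct) auto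

lemma normal_sum_summands: "normal_sum s \<Longrightarrow> x \<in> set (summands s) \<Longrightarrow> normal_prod x"
  by (induction s rule: summands.induct) auto

lemma no_proper_zero_summand_not_is_Add: "\<not> is_Add x \<Longrightarrow> no_proper_zero_summand x"
  by (simp add: no_proper_zero_summand_def summands_not_Add)

lemma no_proper_zero_summand_filter:
  "no_proper_zero_summand s \<Longrightarrow> s \<noteq> Cst 0 \<Longrightarrow> filter (\<lambda>x. x \<noteq> Cst 0) (summands s) = summands s"
  unfolding no_proper_zero_summand_def by (auto simp: filter_id_conv)

lemma is_monomial_summands:
  fixes s :: "('c::field, 'v, 'f) trm"
  assumes "normal_sum s" "no_proper_zero_summand s" "is_Add s" "m \<in> set (summands s)"
  shows "is_monomial m"
proof -
  have m: "normal_prod m" "m \<noteq> Cst 0"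
    using assms normal_sum_summands by (auto simp: no_proper_zero_summand_def)
  show ?thesis
    using normal_prod_factors_is_factor[OF m(1)] normal_prod_Mul_factors_neq_Cst[OF m(1)] m(2)
    by (cases "is_Mul m") (auto simp: is_monomial_def factors_not_Mul)
qed

lemma products_sorted_factors:
  "products_sorted ges s \<Longrightarrow> x \<in> set (factors s) \<Longrightarrow> products_sorted ges x"
  by (induction s rule: factors.induct) auto

lemma products_sorted_summands:
  "products_sorted ges s \<Longrightarrow> x \<in> set (summands s) \<Longrightarrow> products_sorted ges x"
  by (induction s rule: summands.induct) auto

lemma products_sorted_sorted_factors: "products_sorted ges s \<Longrightarrow> sorted_wrt (ge_l ges) (factors s)"
  by (cases s) auto

lemma products_sorted_mk_prod:
  "L \<noteq> [] \<Longrightarrow> \<forall>x\<in>set L. products_sorted ges x \<and> \<not> is_Mul x \<Longrightarrow> sorted_wrt (ge_l ges) L \<Longrightarrow>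
   products_sorted ges (mk_prod L)"
proof (induction L rule: mk_prod.induct)
  case (3 t v va)
  then show ?case by (auto simp: factors_mk_prod factors_not_Mul)
qed auto

lemma products_sorted_mk_sum: "\<forall>x\<in>set L. products_sorted ges x \<Longrightarrow> products_sorted ges (mk_sum L)"
  by (induction L rule: mk_sum.induct) auto

lemma sums_sorted_iff:
  "normal_sum s \<Longrightarrow> sums_sorted ges s \<longleftrightarrow> sorted_wrt (ge_p ges) (filter (\<lambda>x. x \<noteq> Cst 0) (summands s))"
proof -
  have "plus_free s \<Longrightarrow> sums_sorted ges s" for s :: "('a, 'b, 'c) trm"
    by (induction s) auto
  then show "normal_sum s \<Longrightarrow> ?thesis"
    by (induction s) (auto simp: sorted_wrt_append dest: normal_prod_plus_free)
qed

lemma no_repeated_block_not_is_Add: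
  assumes "\<not> is_Add x"
  shows "no_repeated_block x"
proof (rule ccontr)
  assume "\<not> no_repeated_block x"
  then obtain A L B where "L \<noteq> []" and blocks: "map assoc_nf (summands x) = A @ L @ L @ B"
    unfolding no_repeated_block_def by blast
  then have "2 \<le> length (A @ L @ L @ B)" by (cases L) auto
  also have "length (A @ L @ L @ B) = 1" using blocks[symmetric] summands_not_Add[OF assms] by simp
  finally show False by simp
qed

lemma no_repeated_block_AddD:
  assumes "no_repeated_block (Add a b)"
  shows "no_repeated_block a" and "no_repeated_block b"
proof -
  have split:
    "map assoc_nf (summands (Add a b)) = map assoc_nf (summands a) @ map assoc_nf (summands b)"
    by simp
  show "no_repeated_block a"
  proof (rule ccontr)
    assume "\<not> no_repeated_block a"
    then obtain A L B where "L \<noteq> []" "map assoc_nf (summands a) = A @ L @ L @ B"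
      unfolding no_repeated_block_def by blast
    then show False
      using assms split unfolding no_repeated_block_def by (metis append.assoc)
  qed
  show "no_repeated_block b"
  proof (rule ccontr)
    assume "\<not> no_repeated_block b"
    then obtain A L B where "L \<noteq> []" "map assoc_nf (summands b) = A @ L @ L @ B"
      unfolding no_repeated_block_def by blast
    then show False
      using assms split unfolding no_repeated_block_def by (metis append.assoc)
  qed
qed

lemma mk_prod_is_Mul: "2 \<le> length L \<Longrightarrow> is_Mul (mk_prod L)"
  by (induction L rule: mk_prod.induct) auto

lemma mk_sum_is_Add: "2 \<le> length L \<Longrightarrow> is_Add (mk_sum L)"
  by (induction L rule: mk_sum.induct) auto

section \<open>Termination of R3--R13 and the shape of their normal forms\<close>

fun weight :: "('c, 'v, 'f) trm \<Rightarrow> nat" where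
  "weight (Cst c) = 2"
| "weight (Var v) = 2"
| "weight (Add a b) = weight a + weight b + 1"
| "weight (Mul a b) = weight a * weight b"
| "weight (Aff f t) = 2 ^ weight t"

lemma weight_ge_2: "2 \<le> weight s"
proof (induction s)
  case (Mul a b)
  then show ?case using mult_le_mono[of 2 "weight a" 2 "weight b"] by simp
next
  case (Aff f t)
  then show ?case using power_increasing[of 2 "weight t" "2::nat"] by simp
qed auto

lemma weight_aeq: "aeq s t \<Longrightarrow> weight s = weight t"
  by (induction rule: aeq.induct) (auto simp: algebra_simps)

lemma two_power_add_gt:
  fixes a b :: nat
  assumes "2 \<le> a" "2 \<le> b"
  shows "2 ^ a + 2 ^ b + 4 < 2 * (2::nat) ^ (a + b)"
proof -
  have "4 \<le> (2::nat) ^ a" "4 \<le> (2::nat) ^ b"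
    using assms power_increasing[of 2 _ "2::nat"] by simp_all
  then have "2 ^ a * 4 + 2 ^ b * 4 \<le> 2 * (2 ^ a * (2::nat) ^ b)"
    by (metis add_le_mono mult_2 mult.commute mult_le_mono2)
  then show ?thesis
    using \<open>4 \<le> (2::nat) ^ a\<close> by (simp add: power_add)
qed

lemma weight_rule_less:
  assumes "rule ges lam i s t" and "i \<in> {3..13}"
  shows "weight t < weight s"
proof -
  from assms consider
      (zero) u where "s = Add u u \<or> s = Mul u (Cst 0) \<or> s = Mul (Cst 0) u" "t = Cst 0"
    | (unit) "s = Add t (Cst 0) \<or> s = Add (Cst 0) t \<or> s = Mul t (Cst 1) \<or> s = Mul (Cst 1) t"
    | (distrib) u1 u2 u where "s = Mul (Add u1 u2) u \<and> t = Add (Mul u1 u) (Mul u2 u)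
        \<or> s = Mul u (Add u1 u2) \<and> t = Add (Mul u u1) (Mul u u2)"
    | (affine) f u1 u2 where "s = Aff f (Add u1 u2)"
        "t = Add (Add (Aff f u1) (Aff f u2)) (Cst (lam f))"
    | (affine_zero) f where "s = Aff f (Cst 0)" "t = Cst (lam f)"
    unfolding rule_def atLeastAtMost_iff by (elim disjE conjE exE; linarith?; blast)
  then show ?thesis
  proof cases
    case (zero u)
    then show ?thesis using weight_ge_2[of u] by auto
  next
    case unit
    then show ?thesis using weight_ge_2[of t] by auto
  next
    case (distrib u1 u2 u)
    then show ?thesis using weight_ge_2[of u] by (auto simp: algebra_simps)
  next
    case (affine f u1 u2)
    then show ?thesis using two_power_add_gt[OF weight_ge_2 weight_ge_2, of u1 u2] by simp
  qed simp
qed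

lemma weight_ctx_step_less:
  "ctx_step R s t \<Longrightarrow> (\<And>a b. R a b \<Longrightarrow> weight b < weight a) \<Longrightarrow> weight t < weight s"
proof (induction rule: ctx_step.induct)
  case (mul_l s t u)
  then show ?case using weight_ge_2[of u] by simp
next
  case (mul_r s t u)
  then show ?case using weight_ge_2[of u] by simp
qed (auto simp: power_strict_increasing)

lemma nf_reachable_R3_R13:
  assumes "I \<subseteq> {3..13}"
  shows "\<exists>t. (rstep (rules ges lam I))\<^sup>*\<^sup>* s t \<and> is_nf (rules ges lam I) t"
proof (rule nf_reachable_if_decreasing)
  fix s t
  assume "rstep (rules ges lam I) s t"
  then obtain s' t' where "aeq s s'" "ctx_step (rules ges lam I) s' t'" "aeq t' t"
    unfolding rstep_def by blast
  moreover have "weight t' < weight s'"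
    using \<open>ctx_step (rules ges lam I) s' t'\<close> assms
    by (elim weight_ctx_step_less) (auto simp: rules_def intro: weight_rule_less)
  ultimately show "weight t < weight s" by (simp add: weight_aeq)
qed

lemma normal_sum_if_nf_R3_R13:
  fixes s :: "('c::field, 'v, 'f) trm"
  assumes "is_nf (rules ges lam {3..13}) s"
  shows "normal_sum s \<and> no_proper_zero_summand s"
  using assms
proof (induction s)
  case (Add a b)
  then have "a \<noteq> Cst 0" "b \<noteq> Cst 0"
    using is_nf_rulesD[OF Add.prems, of 6] is_nf_rulesD[OF Add.prems, of 7] by (auto simp: rule_def)
  with Add show ?case by (auto simp: no_proper_zero_summand_def dest: is_nf_AddD)
next
  case (Mul a b)
  have "\<not> is_Add a" "\<not> is_Add b" "a \<noteq> Cst 0" "a \<noteq> Cst 1" "b \<noteq> Cst 0" "b \<noteq> Cst 1"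
    using is_nf_rulesD[OF Mul.prems, of 4] is_nf_rulesD[OF Mul.prems, of 5]
      is_nf_rulesD[OF Mul.prems, of 8] is_nf_rulesD[OF Mul.prems, of 9]
      is_nf_rulesD[OF Mul.prems, of 10] is_nf_rulesD[OF Mul.prems, of 11]
    by (auto simp: rule_def elim!: is_Add.elims)
  moreover have "normal_sum a" "normal_sum b" using Mul by (auto dest: is_nf_MulD)
  ultimately show ?case
    by (cases a; cases b) (auto simp: no_proper_zero_summand_def)
next
  case (Aff f t)
  have "\<not> is_Add t" "t \<noteq> Cst 0"
    using is_nf_rulesD[OF Aff.prems, of 12] is_nf_rulesD[OF Aff.prems, of 13]
    by (auto simp: rule_def elim!: is_Add.elims)
  moreover have "normal_sum t" using Aff by (auto dest: is_nf_AffD)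
  ultimately show ?case by (cases t) (auto simp: no_proper_zero_summand_def)
qed (auto simp: no_proper_zero_summand_def)

section \<open>Sorting the products (R2, innermost)\<close>

lemma rule_R2_shape:
  assumes "rule ges lam 2 s t"
  shows "is_Mul s" and "t = mk_prod (sort_by (ge_l ges) (factors s))"
    and "sort_by (ge_l ges) (factors s) \<noteq> factors s" and "2 \<le> length (factors s)"
proof -
  have r: "sort_by (ge_l ges) (factors s) \<noteq> factors s"
      "t = mk_prod (sort_by (ge_l ges) (factors s))"
    using assms by (simp_all add: rule_def)
  then show "2 \<le> length (factors s)"
    using sort_by_length_le_1[of "factors s" "ge_l ges"] by fastforce
  then show "is_Mul s" using factors_not_Mul by fastforce
  show "sort_by (ge_l ges) (factors s) \<noteq> factors s" "t = mk_prod (sort_by (ge_l ges) (factors s))"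
    using r by simp_all
qed

lemma ctx_step_R2_preserves:
  "ctx_step (rule2_inner ges lam) s t \<Longrightarrow>
     (normal_prod s \<longrightarrow> normal_prod t) \<and> (normal_sum s \<longrightarrow> normal_sum t)
   \<and> (\<forall>c. Cst c \<in> set (factors t) \<longrightarrow> Cst c \<in> set (factors s))
   \<and> (\<forall>c. Cst c \<in> set (summands t) \<longrightarrow> Cst c \<in> set (summands s))
   \<and> (\<forall>c. s \<noteq> Cst c \<and> t \<noteq> Cst c)"
proof (induction rule: ctx_step.induct)
  case (root s t)
  then have R2: "rule ges lam 2 s t" by (simp add: rule2_inner_def)
  let ?L = "sort_by (ge_l ges) (factors s)"
  have t: "t = mk_prod ?L" and "2 \<le> length ?L"
    using rule_R2_shape[OF R2] by simp_all
  then have factors_t: "factors t = ?L" and "is_Mul t"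
    using factors_mk_prod[of ?L] mk_prod_is_Mul[of ?L] not_is_Mul_factors by auto
  then have summands_t: "summands t = [t]" by (cases t) auto
  have "normal_prod t" if "normal_prod s"
    using t normal_prod_mk_prod[of ?L] normal_prod_factors[OF that] not_is_Mul_factors
      normal_prod_Mul_factors_neq_Cst[OF that rule_R2_shape(1)[OF R2]]
    by auto
  moreover have "\<not> is_Add s" "\<not> is_Add t"
    using rule_R2_shape(1)[OF R2] \<open>is_Mul t\<close> by (auto elim: is_Mul.elims)
  ultimately show ?case
    using factors_t summands_t \<open>is_Mul t\<close> rule_R2_shape(1)[OF R2]
    by (auto simp: normal_sum_not_is_Add summands_not_Add elim: is_Mul.elims)
qed auto

lemma rsteps_R2_preserve:
  assumes "(rstep (rule2_inner ges lam))\<^sup>*\<^sup>* s t" and "normal_sum s \<and> no_proper_zero_summand s"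
  shows "normal_sum t \<and> no_proper_zero_summand t"
proof (rule rsteps_preserve[where P = "\<lambda>x. normal_sum x \<and> no_proper_zero_summand x", OF _ _ assms])
  fix s s' :: "('a, 'b, 'c) trm"
  assume "aeq s s'" "normal_sum s \<and> no_proper_zero_summand s"
  then show "normal_sum s' \<and> no_proper_zero_summand s'"
    using normal_prod_normal_sum_aeq no_proper_zero_summand_aeq by blast
next
  fix s t :: "('a, 'b, 'c) trm"
  assume "ctx_step (rule2_inner ges lam) s t" "normal_sum s \<and> no_proper_zero_summand s"
  then show "normal_sum t \<and> no_proper_zero_summand t"
    using ctx_step_R2_preserves[of ges lam s t] by (auto simp: no_proper_zero_summand_def)
qed

lemma products_sorted_imp_nf_R2:
  assumes tor: "total_order_rel ges" and "products_sorted ges s"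
  shows "is_nf (rules ges lam {2}) s"
  using assms(2)
proof (rule is_nf_by_invariant[where P = "products_sorted ges", rotated -1])
  fix s t :: "('a, 'b, 'c) trm"
  assume "products_sorted ges s" "rules ges lam {2} s t"
  then show False
    using rule_R2_shape(3) sort_by_sorted_id products_sorted_sorted_factors
    by (metis rules_def singletonD)
qed (auto simp: products_sorted_aeq[OF tor])

lemma rule_R2_inner_sorting:
  fixes m :: "('c::field, 'v, 'f) trm"
  assumes tor: "total_order_rel ges" and "normal_prod m"
    and "\<forall>x\<in>set (factors m). products_sorted ges x" and "\<not> sorted_wrt (ge_l ges) (factors m)"
  shows "rule2_inner ges lam m (mk_prod (sort_by (ge_l ges) (factors m)))"
proof -
  have "set (factors m) \<subseteq> {x. is_factor x}"
    using normal_prod_factors_is_factor[OF assms(2)] by blast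
  then have "sort_by (ge_l ges) (factors m) \<noteq> factors m"
    using assms(4) sort_by_eq_iff_sorted[OF total_preorder_on_factors[OF tor]] by blast
  moreover have "\<forall>x\<in>set (factors m). is_nf (rules ges lam {2}) x"
    using assms(3) products_sorted_imp_nf_R2[OF tor] by blast
  ultimately show ?thesis
    using \<open>set (factors m) \<subseteq> {x. is_factor x}\<close> unfolding rule2_inner_def rule_def by auto
qed

lemma products_sorted_if_nf_R2_inner:
  fixes s :: "('c::field, 'v, 'f) trm"
  assumes tor: "total_order_rel ges"
  shows "is_nf (rule2_inner ges lam) s \<Longrightarrow> normal_sum s \<Longrightarrow> products_sorted ges s"
proof (induction s)
  case (Add a b)
  then show ?case by (auto dest: is_nf_AddD)
next
  case (Aff f t)
  then show ?case by (auto dest: is_nf_AffD normal_prod_normal_sum)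
next
  case (Mul a b)
  then have sorted: "products_sorted ges a" "products_sorted ges b"
    by (auto dest: is_nf_MulD normal_prod_normal_sum)
  show ?case
  proof (rule ccontr)
    assume "\<not> products_sorted ges (Mul a b)"
    then have "rule2_inner ges lam (Mul a b) (mk_prod (sort_by (ge_l ges) (factors (Mul a b))))"
      using Mul.prems(2) sorted products_sorted_factors
      by (intro rule_R2_inner_sorting[OF tor]) auto
    then show False using is_nf_not_root[OF Mul.prems(1)] by blast
  qed
qed auto

fun sort_products :: "(('c::one, 'v, 'f) sym \<Rightarrow> ('c, 'v, 'f) sym \<Rightarrow> bool) \<Rightarrow> ('c, 'v, 'f) trm
    \<Rightarrow> ('c, 'v, 'f) trm" where
  "sort_products ges (Cst c) = Cst c"
| "sort_products ges (Var v) = Var v"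
| "sort_products ges (Add a b) = Add (sort_products ges a) (sort_products ges b)"
| "sort_products ges (Aff f t) = Aff f (sort_products ges t)"
| "sort_products ges (Mul a b) =
    (let m = Mul (sort_products ges a) (sort_products ges b)
     in if sorted_wrt (ge_l ges) (factors m) then m else mk_prod (sort_by (ge_l ges) (factors m)))"

lemma rsteps_R2_sort_products:
  fixes s :: "('c::field, 'v, 'f) trm"
  assumes tor: "total_order_rel ges"
  shows "normal_sum s \<Longrightarrow>
    (rstep (rule2_inner ges lam))\<^sup>*\<^sup>* s (sort_products ges s)
    \<and> products_sorted ges (sort_products ges s)"
proof (induction s)
  case (Add a b)
  then show ?case by (auto intro: rsteps_Add)
next
  case (Aff f t)
  then show ?case by (auto intro: rsteps_Aff normal_prod_normal_sum)
next
  case (Mul a b)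
  then have IH:
      "(rstep (rule2_inner ges lam))\<^sup>*\<^sup>* a (sort_products ges a)" "products_sorted ges (sort_products ges a)"
      "(rstep (rule2_inner ges lam))\<^sup>*\<^sup>* b (sort_products ges b)" "products_sorted ges (sort_products ges b)"
    by (auto intro: normal_prod_normal_sum)
  define m where "m = Mul (sort_products ges a) (sort_products ges b)"
  let ?L = "sort_by (ge_l ges) (factors m)"
  have steps: "(rstep (rule2_inner ges lam))\<^sup>*\<^sup>* (Mul a b) m"
    unfolding m_def using IH by (blast intro: rsteps_Mul)
  then have "normal_prod m"
    using rsteps_R2_preserve[OF steps] Mul.prems by (simp add: no_proper_zero_summand_def m_def)
  have factors_sorted: "\<forall>x\<in>set (factors m). products_sorted ges x"
    using IH products_sorted_factors unfolding m_def by auto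
  show ?case
  proof (cases "sorted_wrt (ge_l ges) (factors m)")
    case True
    then show ?thesis using steps IH by (simp add: m_def)
  next
    case False
    then have "rule2_inner ges lam m (mk_prod ?L)"
      using rule_R2_inner_sorting[OF tor \<open>normal_prod m\<close> factors_sorted] by blast
    then have "(rstep (rule2_inner ges lam))\<^sup>*\<^sup>* (Mul a b) (mk_prod ?L)"
      using steps rstep_root by (metis rtranclp.rtrancl_into_rtrancl)
    moreover have "set (factors m) \<subseteq> {x. is_factor x}"
      using normal_prod_factors_is_factor[OF \<open>normal_prod m\<close>] by blast
    then have "products_sorted ges (mk_prod ?L)"
      using factors_sorted not_is_Mul_factors sorted_sort_by[OF total_preorder_on_factors[OF tor]]
      by (intro products_sorted_mk_prod) auto
    ultimately show ?thesis using False by (simp add: m_def[symmetric] Let_def)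
  qed
qed auto

section \<open>Sorting the sums (R1)\<close>

lemma rule_R1_shape:
  assumes "rule ges lam 1 s t"
  shows "is_Add s" and "t = mk_sum (sort_by (ge_p ges) (summands s))"
    and "sort_by (ge_p ges) (summands s) \<noteq> summands s" and "2 \<le> length (summands s)"
proof -
  have r: "sort_by (ge_p ges) (summands s) \<noteq> summands s"
      "t = mk_sum (sort_by (ge_p ges) (summands s))"
    using assms by (simp_all add: rule_def)
  then show "2 \<le> length (summands s)"
    using sort_by_length_le_1[of "summands s" "ge_p ges"] by fastforce
  then show "is_Add s" using summands_not_Add by fastforce
  show "sort_by (ge_p ges) (summands s) \<noteq> summands s" "t = mk_sum (sort_by (ge_p ges) (summands s))"
    using r by simp_all
qed

lemma ctx_step_R1_not_plus_free: "ctx_step (rules ges lam {1}) s t \<Longrightarrow> \<not> plus_free s"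
  by (erule ctx_step_redex_Add_not_plus_free) (use rule_R1_shape(1) in \<open>auto simp: rules_def\<close>)

lemma ctx_step_R1_preserves:
  "ctx_step (rules ges lam {1}) s t \<Longrightarrow> normal_sum s \<Longrightarrow>
     normal_sum t \<and> is_Add t \<and> (Cst 0 \<in> set (summands t) \<longrightarrow> Cst 0 \<in> set (summands s))
   \<and> (products_sorted ges s \<longrightarrow> products_sorted ges t)"
proof (induction rule: ctx_step.induct)
  case (root s t)
  then have R1: "rule ges lam 1 s t" by (simp add: rules_def)
  let ?L = "sort_by (ge_p ges) (summands s)"
  have t: "t = mk_sum ?L" and "2 \<le> length ?L"
    using rule_R1_shape[OF R1] by simp_all
  then have "summands t = ?L" "is_Add t"
    using summands_mk_sum[of ?L] mk_sum_is_Add[of ?L] not_is_Add_summands by auto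
  moreover have "\<forall>x\<in>set ?L. normal_sum x"
    using normal_sum_summands[OF root.prems] normal_prod_normal_sum by auto
  then have "normal_sum t" using t normal_sum_mk_sum by blast
  moreover have "products_sorted ges s \<longrightarrow> products_sorted ges t"
    using t products_sorted_summands by (auto intro!: products_sorted_mk_sum)
  ultimately show ?case by simp
next
  case (mul_l s t u)
  then show ?case
    using ctx_step_R1_not_plus_free[OF mul_l.hyps] normal_prod_plus_free
    by auto
next
  case (mul_r s t u)
  then show ?case
    using ctx_step_R1_not_plus_free[OF mul_r.hyps] normal_prod_plus_free
    by auto
next
  case (aff s t f)
  then show ?case
    using ctx_step_R1_not_plus_free[OF aff.hyps] normal_prod_plus_free
    by auto
qed auto

lemma rsteps_R1_preserve:
  assumes tor: "total_order_rel ges"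
    and "(rstep (rules ges lam {1}))\<^sup>*\<^sup>* s t"
    and "normal_sum s \<and> no_proper_zero_summand s \<and> products_sorted ges s"
  shows "normal_sum t \<and> no_proper_zero_summand t \<and> products_sorted ges t"
proof (rule rsteps_preserve[where
      P = "\<lambda>x. normal_sum x \<and> no_proper_zero_summand x \<and> products_sorted ges x",
      OF _ _ assms(2,3)])
  fix s s' :: "('a, 'b, 'c) trm"
  assume "aeq s s'" "normal_sum s \<and> no_proper_zero_summand s \<and> products_sorted ges s"
  then show "normal_sum s' \<and> no_proper_zero_summand s' \<and> products_sorted ges s'"
    using normal_prod_normal_sum_aeq no_proper_zero_summand_aeq products_sorted_aeq[OF tor] by blast
next
  fix s t :: "('a, 'b, 'c) trm"
  assume step: "ctx_step (rules ges lam {1}) s t"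
    and inv: "normal_sum s \<and> no_proper_zero_summand s \<and> products_sorted ges s"
  have "s \<noteq> Cst 0"
    using ctx_step_R1_not_plus_free[OF step] by auto
  with inv show "normal_sum t \<and> no_proper_zero_summand t \<and> products_sorted ges t"
    using ctx_step_R1_preserves[OF step] by (auto simp: no_proper_zero_summand_def)
qed

lemma summands_products_of_factors:
  fixes s :: "('c::field, 'v, 'f) trm"
  assumes "normal_sum s" "no_proper_zero_summand s" "is_Add s"
  shows "set (summands s) \<subseteq> {m. \<forall>x\<in>set (factors m). is_factor x}"
  using is_monomial_summands[OF assms] by (auto simp: is_monomial_def)

lemma summands_sorted_if_nf_R1:
  fixes s :: "('c::field, 'v, 'f) trm"
  assumes tor: "total_order_rel ges" and nf: "is_nf (rules ges lam {1}) s"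
    and "normal_sum s" "no_proper_zero_summand s"
  shows "sorted_wrt (ge_p ges) (summands s)"
proof (cases "is_Add s")
  case True
  show ?thesis
  proof (rule ccontr)
    assume "\<not> sorted_wrt (ge_p ges) (summands s)"
    then have "sort_by (ge_p ges) (summands s) \<noteq> summands s"
      using sort_by_eq_iff_sorted[OF total_preorder_on_monomials[OF tor]]
        summands_products_of_factors[OF assms(3,4) True] by blast
    then have "rule ges lam 1 s (mk_sum (sort_by (ge_p ges) (summands s)))"
      using is_monomial_summands[OF assms(3,4) True] by (simp add: rule_def)
    then show False using is_nf_rulesD[OF nf, of 1] by blast
  qed
qed (simp add: summands_not_Add)

lemma sums_sorted_imp_nf_R1:
  assumes tor: "total_order_rel ges"
    and "sums_sorted ges s \<and> no_proper_zero_summand s \<and> normal_sum s"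
  shows "is_nf (rules ges lam {1}) s"
proof (rule is_nf_by_invariant[where
      P = "\<lambda>x. sums_sorted ges x \<and> no_proper_zero_summand x \<and> normal_sum x",
      OF _ _ _ _ _ assms(2)])
  fix s s' :: "('a, 'b, 'c) trm"
  assume "aeq s s'" "sums_sorted ges s \<and> no_proper_zero_summand s \<and> normal_sum s"
  then show "sums_sorted ges s' \<and> no_proper_zero_summand s' \<and> normal_sum s'"
    using sums_sorted_aeq[OF tor] no_proper_zero_summand_aeq normal_prod_normal_sum_aeq by blast
next
  fix a b :: "('a, 'b, 'c) trm"
  assume "sums_sorted ges (Add a b) \<and> no_proper_zero_summand (Add a b) \<and> normal_sum (Add a b)"
  then show "(sums_sorted ges a \<and> no_proper_zero_summand a \<and> normal_sum a)
      \<and> sums_sorted ges b \<and> no_proper_zero_summand b \<and> normal_sum b"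
    by (auto simp: no_proper_zero_summand_def)
next
  fix a b :: "('a, 'b, 'c) trm"
  assume inv: "sums_sorted ges (Mul a b) \<and> no_proper_zero_summand (Mul a b) \<and> normal_sum (Mul a b)"
  then have "normal_prod a" "normal_prod b" by auto
  with inv show "(sums_sorted ges a \<and> no_proper_zero_summand a \<and> normal_sum a)
      \<and> sums_sorted ges b \<and> no_proper_zero_summand b \<and> normal_sum b"
    by (auto intro!: no_proper_zero_summand_not_is_Add normal_prod_normal_sum plus_free_not_is_Add
        normal_prod_plus_free)
next
  fix f a
  assume inv: "sums_sorted ges (Aff f a) \<and> no_proper_zero_summand (Aff f a) \<and> normal_sum (Aff f a)"
  then have "normal_prod a" by auto
  with inv show "sums_sorted ges a \<and> no_proper_zero_summand a \<and> normal_sum a"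
    by (auto intro!: no_proper_zero_summand_not_is_Add normal_prod_normal_sum plus_free_not_is_Add
        normal_prod_plus_free)
next
  fix s t
  assume inv: "sums_sorted ges s \<and> no_proper_zero_summand s \<and> normal_sum s"
    and "rules ges lam {1} s t"
  then have R1: "rule ges lam 1 s t" by (simp add: rules_def)
  have "s \<noteq> Cst 0" using rule_R1_shape(1)[OF R1] by auto
  then have "sorted_wrt (ge_p ges) (summands s)"
    using inv sums_sorted_iff no_proper_zero_summand_filter by metis
  then show False using rule_R1_shape(3)[OF R1] sort_by_sorted_id by metis
qed

lemma nf_reachable_R1:
  fixes s :: "('c::field, 'v, 'f) trm"
  assumes tor: "total_order_rel ges" and "normal_sum s" "no_proper_zero_summand s"
  shows "\<exists>t. (rstep (rules ges lam {1}))\<^sup>*\<^sup>* s t \<and> is_nf (rules ges lam {1}) t"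
proof (cases "sorted_wrt (ge_p ges) (summands s)")
  case True
  then have "sums_sorted ges s"
    using sums_sorted_iff[OF assms(2)] sorted_wrt_filter by blast
  then show ?thesis using sums_sorted_imp_nf_R1[OF tor] assms(2,3) by blast
next
  case False
  then have "is_Add s" by (cases s) auto
  let ?L = "sort_by (ge_p ges) (summands s)"
  have monomials: "set (summands s) \<subseteq> {m. \<forall>x\<in>set (factors m). is_factor x}"
    using summands_products_of_factors[OF assms(2,3) \<open>is_Add s\<close>] .
  have "?L \<noteq> summands s"
    using False sort_by_eq_iff_sorted[OF total_preorder_on_monomials[OF tor] monomials] by blast
  then have R1: "rules ges lam {1} s (mk_sum ?L)"
    using is_monomial_summands[OF assms(2,3) \<open>is_Add s\<close>] by (simp add: rules_def rule_def)
  then have t: "normal_sum (mk_sum ?L) \<and> is_Add (mk_sum ?L)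
      \<and> (Cst 0 \<in> set (summands (mk_sum ?L)) \<longrightarrow> Cst 0 \<in> set (summands s))"
    using ctx_step_R1_preserves[OF ctx_step.root assms(2)] by blast
  then have "no_proper_zero_summand (mk_sum ?L)"
    using assms(3) \<open>is_Add s\<close> by (auto simp: no_proper_zero_summand_def)
  moreover have "summands (mk_sum ?L) = ?L"
    using summands_mk_sum[of ?L] not_is_Add_summands by auto
  then have "sums_sorted ges (mk_sum ?L)"
    using sums_sorted_iff t sorted_wrt_filter
      sorted_sort_by[OF total_preorder_on_monomials[OF tor] monomials]
    by metis
  ultimately show ?thesis
    using sums_sorted_imp_nf_R1[OF tor] t rstep_root[of "rules ges lam {1}", OF R1] by blast
qed

section \<open>Removing duplicates (R3, R6, R7)\<close>

lemma ctx_step_R367_not_plus_free: "ctx_step (rules ges lam {3, 6, 7}) s t \<Longrightarrow> \<not> plus_free s"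
  by (erule ctx_step_redex_Add_not_plus_free) (auto simp: rules_def rule_def)

lemma ctx_step_R367_preserves:
  "ctx_step (rules ges lam {3, 6, 7}) s t \<Longrightarrow> normal_sum s \<Longrightarrow>
     normal_sum t \<and> (products_sorted ges s \<longrightarrow> products_sorted ges t)
   \<and> set (filter (\<lambda>x. x \<noteq> Cst 0) (summands t)) \<subseteq> set (filter (\<lambda>x. x \<noteq> Cst 0) (summands s))
   \<and> (sorted_wrt (ge_p ges) (filter (\<lambda>x. x \<noteq> Cst 0) (summands s)) \<longrightarrow>
        sorted_wrt (ge_p ges) (filter (\<lambda>x. x \<noteq> Cst 0) (summands t)))"
proof (induction rule: ctx_step.induct)
  case (root s t)
  then have "(\<exists>u. s = Add u u \<and> t = Cst 0) \<or> s = Add t (Cst 0) \<or> s = Add (Cst 0) t"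
    by (auto simp: rules_def rule_def)
  with root.prems show ?case by auto
next
  case (add_l s t u)
  then show ?case by (auto simp: sorted_wrt_append)
next
  case (add_r s t u)
  then show ?case by (auto simp: sorted_wrt_append)
next
  case (mul_l s t u)
  then show ?case using ctx_step_R367_not_plus_free[OF mul_l.hyps] normal_prod_plus_free by auto
next
  case (mul_r s t u)
  then show ?case using ctx_step_R367_not_plus_free[OF mul_r.hyps] normal_prod_plus_free by auto
next
  case (aff s t f)
  then show ?case using ctx_step_R367_not_plus_free[OF aff.hyps] normal_prod_plus_free by auto
qed

lemma rsteps_R367_preserve:
  assumes tor: "total_order_rel ges"
    and "(rstep (rules ges lam {3, 6, 7}))\<^sup>*\<^sup>* s t"
    and "normal_sum s \<and> products_sorted ges s \<and> sums_sorted ges s"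
  shows "normal_sum t \<and> products_sorted ges t \<and> sums_sorted ges t"
proof (rule rsteps_preserve[where
      P = "\<lambda>x. normal_sum x \<and> products_sorted ges x \<and> sums_sorted ges x",
      OF _ _ assms(2,3)])
  fix s s' :: "('a, 'b, 'c) trm"
  assume "aeq s s'" "normal_sum s \<and> products_sorted ges s \<and> sums_sorted ges s"
  then show "normal_sum s' \<and> products_sorted ges s' \<and> sums_sorted ges s'"
    using normal_prod_normal_sum_aeq products_sorted_aeq[OF tor] sums_sorted_aeq[OF tor] by blast
next
  fix s t :: "('a, 'b, 'c) trm"
  assume "ctx_step (rules ges lam {3, 6, 7}) s t"
    and "normal_sum s \<and> products_sorted ges s \<and> sums_sorted ges s"
  then show "normal_sum t \<and> products_sorted ges t \<and> sums_sorted ges t"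
    using ctx_step_R367_preserves sums_sorted_iff by blast
qed

lemma no_proper_zero_summand_if_nf_R367:
  fixes s :: "('c::field, 'v, 'f) trm"
  shows "is_nf (rules ges lam {3, 6, 7}) s \<Longrightarrow> no_proper_zero_summand s"
proof (induction s)
  case (Add a b)
  then have "a \<noteq> Cst 0" "b \<noteq> Cst 0"
    using is_nf_rulesD[OF Add.prems, of 6] is_nf_rulesD[OF Add.prems, of 7] by (auto simp: rule_def)
  with Add show ?case by (auto simp: no_proper_zero_summand_def dest: is_nf_AddD)
qed (auto intro: no_proper_zero_summand_not_is_Add)

lemma no_adjacent_duplicates_if_nf_R367:
  fixes s :: "('c::field, 'v, 'f) trm"
  assumes nf: "is_nf (rules ges lam {3, 6, 7}) s"
  shows "\<nexists>A x B. map assoc_nf (summands s) = A @ [x, x] @ B"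
proof
  assume "\<exists>A x B. map assoc_nf (summands s) = A @ [x, x] @ B"
  then obtain A x B where blocks: "map assoc_nf (summands s) = A @ [x, x] @ B" by blast
  have "y \<in> set (map assoc_nf (summands s)) \<Longrightarrow> assoc_nf y = y \<and> \<not> is_Add y" for y
    using not_is_Add_summands by fastforce
  then have canonical: "\<forall>y\<in>set (A @ [x, x] @ B). assoc_nf y = y \<and> \<not> is_Add y"
    unfolding blocks by blast
  let ?s = "mk_sum (A @ [Add x x] @ B)"
  have "summands ?s = A @ [x, x] @ B"
    using canonical by (simp add: summands_mk_sum_concat concat_map_summands_id summands_not_Add)
  then have "map assoc_nf (summands ?s) = map assoc_nf (summands s)"
    using canonical blocks by (simp add: map_idI)
  then have "aeq s ?s"
    unfolding aeq_iff_assoc_nf_eq by (rule assoc_nf_eqI_summands[OF sym])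
  moreover have "ctx_step (rules ges lam {3, 6, 7}) ?s (mk_sum (A @ [Cst 0] @ B))"
    by (rule ctx_step_in_mk_sum) (simp add: rules_def rule_def)
  ultimately have "rstep (rules ges lam {3, 6, 7}) s (mk_sum (A @ [Cst 0] @ B))"
    unfolding rstep_def using aeq_refl by blast
  then show False
    using nf unfolding is_nf_def by blast
qed

section \<open>Irreducibility of the result\<close>

lemma head_sym_eq_imp_eq:
  "head_sym x = Some s \<Longrightarrow> head_sym y = Some s \<Longrightarrow> \<forall>f. s \<noteq> SAff f \<Longrightarrow> x = y"
  by (cases x; cases y) auto

lemma ge_l_antisym:
  assumes tor: "total_order_rel ges"
  shows "is_factor x \<Longrightarrow> is_factor y \<Longrightarrow> products_sorted ges x \<Longrightarrow> products_sorted ges y \<Longrightarrow>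
    ge_l ges x y \<Longrightarrow> ge_l ges y x \<Longrightarrow> assoc_nf x = assoc_nf (y :: ('c::one, 'v, 'f) trm)"
proof (induction x arbitrary: y rule: measure_induct_rule[of aff_depth])
  case (less x)
  obtain s s' where hs: "head_sym x = Some s" "head_sym y = Some s'"
    using is_factor_head_sym less.prems(1,2) by blast
  then have "s = s'" and lex: "lex_ge (ge_l ges) (arg_list ges x) (arg_list ges y)"
      "lex_ge (ge_l ges) (arg_list ges y) (arg_list ges x)"
    using ge_l_Some_head_sym[OF tor hs] ge_l_Some_head_sym[OF tor hs(2,1)] less.prems(5,6)
      total_order_relD(2)[OF tor, of s s'] by auto
  show ?case
  proof (cases "\<exists>f. s = SAff f")
    case False
    then show ?thesis using head_sym_eq_imp_eq[of x s y] hs \<open>s = s'\<close> by simp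
  next
    case True
    then obtain f t u where xy: "x = Aff f t" "y = Aff f u"
      using hs \<open>s = s'\<close> head_sym_eq_Some_SAff by metis
    then have "arg_list ges x = factors t" "arg_list ges y = factors u"
      using less.prems(3,4) by (simp_all add: sort_by_sorted_id products_sorted_sorted_factors)
    then have "map assoc_nf (factors t) = map assoc_nf (factors u)"
    proof (intro lex_ge_antisym_map[where ge = "ge_l ges"])
      fix a b
      assume ab: "a \<in> set (factors t)" "b \<in> set (factors u)" "ge_l ges a b" "ge_l ges b a"
      have "aff_depth a < aff_depth x"
        using aff_depth_factors[OF ab(1)] xy by simp
      moreover have "is_factor a" "is_factor b" "products_sorted ges a" "products_sorted ges b"
        using less.prems(1-4) xy ab(1,2) plus_free_factors_is_factor products_sorted_factors by auto
      ultimately show "assoc_nf a = assoc_nf b"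
        using less.IH ab(3,4) by blast
    qed (use lex in simp_all)
    then show ?thesis using xy assoc_nf_eqI_factors by simp
  qed
qed

lemma ge_p_antisym:
  assumes tor: "total_order_rel ges"
    and "\<forall>x\<in>set (factors m1). is_factor x" "\<forall>x\<in>set (factors m2). is_factor x"
    and "products_sorted ges m1" "products_sorted ges m2"
    and "ge_p ges m1 m2" "ge_p ges m2 m1"
  shows "assoc_nf m1 = assoc_nf (m2 :: ('c::one, 'v, 'f) trm)"
proof -
  have "lex_ge (ge_l ges) (factors m1) (factors m2)" "lex_ge (ge_l ges) (factors m2) (factors m1)"
    using assms(4-7) by (simp_all add: ge_p_def sort_by_sorted_id products_sorted_sorted_factors)
  then have "map assoc_nf (factors m1) = map assoc_nf (factors m2)"
    by (rule lex_ge_antisym_map)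
      (use assms(2-5) products_sorted_factors ge_l_antisym[OF tor] in blast)
  then show ?thesis by (rule assoc_nf_eqI_factors)
qed

lemma no_repeated_block_if_sorted:
  fixes s :: "('c::field, 'v, 'f) trm"
  assumes tor: "total_order_rel ges" and "normal_sum s" "products_sorted ges s"
    and sorted: "sorted_wrt (ge_p ges) (summands s)"
    and no_dup: "\<nexists>A x B. map assoc_nf (summands s) = A @ [x, x] @ B"
  shows "no_repeated_block s"
  unfolding no_repeated_block_def
proof (rule sorted_wrt_no_square[OF _ _ no_dup])
  show "sorted_wrt (ge_p ges) (map assoc_nf (summands s))"
    using sorted by (simp add: sorted_wrt_map ge_p_assoc_nf[OF tor])
next
  fix x y
  assume "x \<in> set (map assoc_nf (summands s))" "y \<in> set (map assoc_nf (summands s))"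
    and "ge_p ges x y" "ge_p ges y x"
  then obtain m1 m2 where m: "m1 \<in> set (summands s)" "m2 \<in> set (summands s)"
      "x = assoc_nf m1" "y = assoc_nf m2" "ge_p ges m1 m2" "ge_p ges m2 m1"
    by (auto simp: ge_p_assoc_nf[OF tor])
  have "\<forall>a\<in>set (factors m1). is_factor a" "\<forall>a\<in>set (factors m2). is_factor a"
    using m(1,2) assms(2) normal_sum_summands normal_prod_factors_is_factor by blast+
  moreover have "products_sorted ges m1" "products_sorted ges m2"
    using m(1,2) assms(3) products_sorted_summands by blast+
  ultimately show "x = y"
    using ge_p_antisym[OF tor] m by blast
qed

definition reduced_form :: "(('c::{zero,one}, 'v, 'f) sym \<Rightarrow> ('c, 'v, 'f) sym \<Rightarrow> bool)
    \<Rightarrow> ('c, 'v, 'f) trm \<Rightarrow> bool" where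
  "reduced_form ges s \<longleftrightarrow> normal_sum s \<and> no_proper_zero_summand s \<and> products_sorted ges s
     \<and> sums_sorted ges s \<and> no_repeated_block s"

lemma reduced_form_aeq:
  assumes tor: "total_order_rel ges" and "aeq s s'" and "reduced_form ges s"
  shows "reduced_form ges s'"
  using assms(3) normal_prod_normal_sum_aeq[OF assms(2)] no_proper_zero_summand_aeq[OF assms(2)]
    products_sorted_aeq[OF tor assms(2)] sums_sorted_aeq[OF tor assms(2)]
    no_repeated_block_aeq[OF assms(2)]
  unfolding reduced_form_def by blast

lemma reduced_form_if_normal_prod:
  assumes "normal_prod x" and "products_sorted ges x" and "sums_sorted ges x"
  shows "reduced_form ges x"
  using assms normal_prod_not_is_Add[OF assms(1)]
  by (simp add: reduced_form_def normal_prod_normal_sum no_proper_zero_summand_not_is_Add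
      no_repeated_block_not_is_Add)

lemma reduced_form_subterms:
  shows "reduced_form ges (Add a b) \<Longrightarrow> reduced_form ges a \<and> reduced_form ges b"
    and "reduced_form ges (Mul a b) \<Longrightarrow> reduced_form ges a \<and> reduced_form ges b"
    and "reduced_form ges (Aff f a) \<Longrightarrow> reduced_form ges a"
proof -
  assume "reduced_form ges (Add a b)"
  then show "reduced_form ges a \<and> reduced_form ges b"
    using no_repeated_block_AddD[of a b]
    by (auto simp: reduced_form_def no_proper_zero_summand_def)
next
  assume "reduced_form ges (Mul a b)"
  then show "reduced_form ges a \<and> reduced_form ges b"
    using reduced_form_if_normal_prod[of a ges] reduced_form_if_normal_prod[of b ges]
    by (simp add: reduced_form_def)
next
  assume "reduced_form ges (Aff f a)"
  then show "reduced_form ges a"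
    using reduced_form_if_normal_prod[of a ges] by (simp add: reduced_form_def)
qed

lemma no_Delta_root_redex:
  fixes s :: "('c::field, 'v, 'f) trm"
  assumes "reduced_form ges s" and "i \<in> {1..13}"
  shows "\<not> rule ges lam i s t"
proof
  assume R: "rule ges lam i s t"
  from assms(1) have inv: "normal_sum s" "no_proper_zero_summand s" "products_sorted ges s"
    "sums_sorted ges s" "no_repeated_block s"
    unfolding reduced_form_def by blast+
  consider "i = 1" | "i = 2" | "i = 3" | "i \<in> {4..13}"
    using assms(2) by fastforce
  then show False
  proof cases
    case 1
    with R have "is_Add s" "sort_by (ge_p ges) (summands s) \<noteq> summands s"
      using rule_R1_shape by blast+
    moreover have "s \<noteq> Cst 0" using \<open>is_Add s\<close> by auto
    then have "filter (\<lambda>x. x \<noteq> Cst 0) (summands s) = summands s"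
      using no_proper_zero_summand_filter inv(2) by blast
    then have "sorted_wrt (ge_p ges) (summands s)"
      using sums_sorted_iff[OF inv(1)] inv(4) by simp
    ultimately show False using sort_by_sorted_id[of "ge_p ges" "summands s"] by simp
  next
    case 2
    with R show False
      using rule_R2_shape(3)[of ges lam s t]
        sort_by_sorted_id[OF products_sorted_sorted_factors[OF inv(3)]]
      by simp
  next
    case 3
    with R obtain u where "s = Add u u" by (auto simp: rule_def)
    then have "map assoc_nf (summands s)
        = [] @ map assoc_nf (summands u) @ map assoc_nf (summands u) @ []"
      by simp
    moreover have "map assoc_nf (summands u) \<noteq> []" by simp
    ultimately show False using inv(5) unfolding no_repeated_block_def by blast
  next
    case 4
    then have "i \<in> {4, 5, 6, 7, 8, 9, 10, 11, 12, 13}"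
      by simp presburger
    with R inv(1,2) show False
      by (cases s) (auto simp: rule_def no_proper_zero_summand_def)
  qed
qed

lemma is_nf_Delta_if_reduced_form:
  fixes s :: "('c::field, 'v, 'f) trm"
  assumes tor: "total_order_rel ges" and "reduced_form ges s"
  shows "is_nf (Delta ges lam) s"
proof (rule is_nf_by_invariant[where P = "reduced_form ges",
      OF reduced_form_aeq[OF tor] reduced_form_subterms _ assms(2)])
  fix s t :: "('c, 'v, 'f) trm"
  assume "reduced_form ges s" "Delta ges lam s t"
  then show False using no_Delta_root_redex unfolding rules_def by blast
qed

lemma term_norm_exists:
  fixes \<tau> :: "('c::field, 'v, 'f) trm"
  assumes tor: "total_order_rel ges"
  shows "\<exists>\<tau>'. term_norm ges lam \<tau> \<tau>'"
proof -
  obtain \<tau>1 where phase1: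
      "(rstep (rules ges lam {3..13}))\<^sup>*\<^sup>* \<tau> \<tau>1" "is_nf (rules ges lam {3..13}) \<tau>1"
    using nf_reachable_R3_R13[of "{3..13}"] by blast
  then have inv1: "normal_sum \<tau>1 \<and> no_proper_zero_summand \<tau>1"
    by (simp add: normal_sum_if_nf_R3_R13)
  define \<tau>2 where "\<tau>2 = sort_products ges \<tau>1"
  have phase2: "(rstep (rule2_inner ges lam))\<^sup>*\<^sup>* \<tau>1 \<tau>2" "products_sorted ges \<tau>2"
    using rsteps_R2_sort_products[OF tor, of \<tau>1 lam] inv1 by (simp_all add: \<tau>2_def)
  have nf2: "is_nf (rule2_inner ges lam) \<tau>2"
    by (rule is_nf_mono[OF products_sorted_imp_nf_R2[where lam = lam, OF tor phase2(2)]])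
      (simp add: rule2_inner_def rules_def)
  have inv2: "normal_sum \<tau>2 \<and> no_proper_zero_summand \<tau>2"
    using rsteps_R2_preserve[OF phase2(1) inv1] .
  obtain \<tau>3 where phase3: "(rstep (rules ges lam {1}))\<^sup>*\<^sup>* \<tau>2 \<tau>3" "is_nf (rules ges lam {1}) \<tau>3"
    using nf_reachable_R1[OF tor] inv2 by blast
  obtain \<tau>4 where "(rstep (rules ges lam {3, 6, 7}))\<^sup>*\<^sup>* \<tau>3 \<tau>4" "is_nf (rules ges lam {3, 6, 7}) \<tau>4"
    using nf_reachable_R3_R13[of "{3, 6, 7}" ges lam \<tau>3] by fastforce
  with phase1 phase2(1) nf2 phase3 show ?thesis
    unfolding term_norm_def by blast
qed

lemma rules_subset: "rules ges lam I a b \<Longrightarrow> I \<subseteq> J \<Longrightarrow> rules ges lam J a b"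
  unfolding rules_def by blast

lemma term_norm_rsteps_Delta:
  assumes "term_norm ges lam \<tau> \<tau>'"
  shows "(rstep (Delta ges lam))\<^sup>*\<^sup>* \<tau> \<tau>'"
proof -
  obtain \<tau>1 \<tau>2 \<tau>3 where steps:
    "(rstep (rules ges lam {3..13}))\<^sup>*\<^sup>* \<tau> \<tau>1" "(rstep (rule2_inner ges lam))\<^sup>*\<^sup>* \<tau>1 \<tau>2"
    "(rstep (rules ges lam {1}))\<^sup>*\<^sup>* \<tau>2 \<tau>3" "(rstep (rules ges lam {3, 6, 7}))\<^sup>*\<^sup>* \<tau>3 \<tau>'"
    using assms unfolding term_norm_def by blast
  have "(rstep (Delta ges lam))\<^sup>*\<^sup>* \<tau> \<tau>1"
    using steps(1) by (rule rsteps_mono) (erule rules_subset, simp)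
  moreover have "(rstep (Delta ges lam))\<^sup>*\<^sup>* \<tau>1 \<tau>2"
    using steps(2) by (rule rsteps_mono) (force simp: rule2_inner_def rules_def)
  moreover have "(rstep (Delta ges lam))\<^sup>*\<^sup>* \<tau>2 \<tau>3"
    using steps(3) by (rule rsteps_mono) (erule rules_subset, simp)
  moreover have "(rstep (Delta ges lam))\<^sup>*\<^sup>* \<tau>3 \<tau>'"
    using steps(4) by (rule rsteps_mono) (erule rules_subset, simp)
  ultimately show ?thesis by (meson rtranclp_trans)
qed

lemma term_norm_is_nf_Delta:
  fixes \<tau> :: "('c::field, 'v, 'f) trm"
  assumes tor: "total_order_rel ges" and "term_norm ges lam \<tau> \<tau>'"
  shows "is_nf (Delta ges lam) \<tau>'"
proof -
  obtain \<tau>1 \<tau>2 \<tau>3 where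
    phase1: "is_nf (rules ges lam {3..13}) \<tau>1" and
    phase2: "(rstep (rule2_inner ges lam))\<^sup>*\<^sup>* \<tau>1 \<tau>2" "is_nf (rule2_inner ges lam) \<tau>2" and
    phase3: "(rstep (rules ges lam {1}))\<^sup>*\<^sup>* \<tau>2 \<tau>3" "is_nf (rules ges lam {1}) \<tau>3" and
    phase4: "(rstep (rules ges lam {3, 6, 7}))\<^sup>*\<^sup>* \<tau>3 \<tau>'" "is_nf (rules ges lam {3, 6, 7}) \<tau>'"
    using assms(2) unfolding term_norm_def by blast
  have "normal_sum \<tau>2 \<and> no_proper_zero_summand \<tau>2"
    using rsteps_R2_preserve[OF phase2(1)] normal_sum_if_nf_R3_R13[OF phase1] by blast
  then have "normal_sum \<tau>3 \<and> no_proper_zero_summand \<tau>3 \<and> products_sorted ges \<tau>3"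
    using rsteps_R1_preserve[OF tor phase3(1)] products_sorted_if_nf_R2_inner[OF tor phase2(2)]
    by blast
  moreover have "sorted_wrt (ge_p ges) (summands \<tau>3)"
    using summands_sorted_if_nf_R1[OF tor phase3(2)] calculation by blast
  ultimately have inv4: "normal_sum \<tau>' \<and> products_sorted ges \<tau>' \<and> sums_sorted ges \<tau>'"
    using rsteps_R367_preserve[OF tor phase4(1)] sums_sorted_iff sorted_wrt_filter by blast
  have no_zero: "no_proper_zero_summand \<tau>'"
    using no_proper_zero_summand_if_nf_R367[OF phase4(2)] .
  have "sorted_wrt (ge_p ges) (summands \<tau>')"
  proof (cases "\<tau>' = Cst 0")
    case False
    then have "filter (\<lambda>x. x \<noteq> Cst 0) (summands \<tau>') = summands \<tau>'"
      using no_proper_zero_summand_filter no_zero by blast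
    then show ?thesis using inv4 sums_sorted_iff by metis
  qed simp
  then have "no_repeated_block \<tau>'"
    using no_repeated_block_if_sorted[OF tor] inv4 no_adjacent_duplicates_if_nf_R367[OF phase4(2)]
    by blast
  then show ?thesis
    using is_nf_Delta_if_reduced_form[OF tor] inv4 no_zero unfolding reduced_form_def by blast
qed

theorem lemma3:
  fixes ges :: "('c::field, 'v, 'f::finite) sym \<Rightarrow> ('c, 'v, 'f) sym \<Rightarrow> bool"
    and lam :: "'f \<Rightarrow> 'c"
    and \<tau> :: "('c, 'v, 'f) trm"
    and n :: nat
  assumes "0 < n" and "CARD('c) = 2 ^ n"
    and "total_order_rel ges"
  shows "(\<exists>\<tau>'. term_norm ges lam \<tau> \<tau>')
       \<and> (\<forall>\<tau>'. term_norm ges lam \<tau> \<tau>' \<longrightarrow>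
             (rstep (Delta ges lam))\<^sup>*\<^sup>* \<tau> \<tau>' \<and> is_nf (Delta ges lam) \<tau>')"
  using term_norm_exists term_norm_rsteps_Delta term_norm_is_nf_Delta assms(3) by blast

end
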